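(* Let $A$ be a uT-algebra which is weakly $\sigma^*$-compact-regular. Let $B$ be a locally convex algebra with jointly continuous multiplication, and let $\Phi: A\to B$ be an injective algebra homomorphism such that $C:=\overline{\operatorname{Im}\Phi}$ (closure in $B$, with the induced topology) is a Q-algebra. Then the following are equivalent: (1) $\Phi^{-1}|_{\operatorname{Im}\Phi}:\operatorname{Im}\Phi\to A$ is continuous, where $\operatorname{Im}\Phi$ carries the topology induced by $B$; (2) $\operatorname{Im}\Phi\cap SR(C)=\{0\}$; (3) the map $\Phi^{**}: M(C)\to M^*(A)$, $\Phi^{**}(f)=f\circ\Phi$, is surjective.
   Context: All algebras are complex, commutative and have a unit. A topological algebra is an algebra that is also a Hausdorff topological vector space in which multiplication is separately continuous; a locally convex algebra is a topological algebra whose topology is locally convex. A uniform seminorm on an algebra is a seminorm $p$ with $p(x^2)=p(x)^2$ for all $x$; a uT-algebra is a topological algebra whose topology is determined by a family of uniform seminorms. For an algebra $A$, $M^*(A)$ is the set of all nonzero multiplicative linear functionals on $A$ (with the weak* topology); for a topological algebra $A$, $M(A)$ is the set of nonzero continuous multiplicative linear functionals. A topological algebra is a Q-algebra if its set of invertible elements is open. A topological algebra $A$ is weakly $\sigma^*$-compact-regular if for every compact subset $K\subsetneq M^*(A)$ there is a nonzero $x\in A$ with $f(x)=0$ for all $f\in K$. For a topological algebra $C$ with $M(C)\neq\emptyset$, the strong radical is $SR(C)=\{x\in C : f(x)=0 \text{ for all } f\in M(C)\}$. *)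

theory Defs
  imports "HOL-Analysis.Analysis"
begin

text \<open>A complex commutative unital algebra: the ring structure is the type class
  comm_ring_1; the complex scalar multiplication is given explicitly as sm.\<close>
definition calg :: "(complex \<Rightarrow> 'a::comm_ring_1 \<Rightarrow> 'a) \<Rightarrow> bool" where
  "calg sm \<longleftrightarrow>
     (\<forall>c x y. sm c (x + y) = sm c x + sm c y) \<and>
     (\<forall>c d x. sm (c + d) x = sm c x + sm d x) \<and>
     (\<forall>c d x. sm (c * d) x = sm c (sm d x)) \<and>
     (\<forall>x. sm 1 x = x) \<and>
     (\<forall>c x y. sm c (x * y) = sm c x * y)"

definition top_alg :: "(complex \<Rightarrow> 'a::comm_ring_1 \<Rightarrow> 'a) \<Rightarrow> 'a topology \<Rightarrow> bool" where
  "top_alg sm T \<longleftrightarrow>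
     calg sm \<and> topspace T = UNIV \<and> Hausdorff_space T \<and>
     continuous_map (prod_topology T T) T (\<lambda>(x, y). x + y) \<and>
     continuous_map (prod_topology euclidean T) T (\<lambda>(c, x). sm c x) \<and>
     (\<forall>a. continuous_map T T (\<lambda>x. a * x))"

definition seminorm :: "(complex \<Rightarrow> 'a::comm_ring_1 \<Rightarrow> 'a) \<Rightarrow> ('a \<Rightarrow> real) \<Rightarrow> bool" where
  "seminorm sm p \<longleftrightarrow>
     (\<forall>x. 0 \<le> p x) \<and> (\<forall>x y. p (x + y) \<le> p x + p y) \<and> (\<forall>c x. p (sm c x) = cmod c * p x)"

definition uniform_seminorm :: "(complex \<Rightarrow> 'a::comm_ring_1 \<Rightarrow> 'a) \<Rightarrow> ('a \<Rightarrow> real) \<Rightarrow> bool" where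
  "uniform_seminorm sm p \<longleftrightarrow> seminorm sm p \<and> (\<forall>x. p (x * x) = (p x)^2)"

definition determined_by :: "'a::comm_ring_1 topology \<Rightarrow> ('a \<Rightarrow> real) set \<Rightarrow> bool" where
  "determined_by T P \<longleftrightarrow>
     (\<forall>U. openin T U \<longleftrightarrow>
        (\<forall>x\<in>U. \<exists>F e. finite F \<and> F \<subseteq> P \<and> e > 0 \<and> {y. \<forall>p\<in>F. p (y - x) < e} \<subseteq> U))"

definition locally_convex_alg :: "(complex \<Rightarrow> 'a::comm_ring_1 \<Rightarrow> 'a) \<Rightarrow> 'a topology \<Rightarrow> bool" where
  "locally_convex_alg sm T \<longleftrightarrow>
     top_alg sm T \<and> (\<exists>P. (\<forall>p\<in>P. seminorm sm p) \<and> determined_by T P)"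

definition uT_alg :: "(complex \<Rightarrow> 'a::comm_ring_1 \<Rightarrow> 'a) \<Rightarrow> 'a topology \<Rightarrow> bool" where
  "uT_alg sm T \<longleftrightarrow>
     top_alg sm T \<and> (\<exists>P. (\<forall>p\<in>P. uniform_seminorm sm p) \<and> determined_by T P)"

definition Mstar :: "(complex \<Rightarrow> 'a::comm_ring_1 \<Rightarrow> 'a) \<Rightarrow> ('a \<Rightarrow> complex) set" where
  "Mstar sm = {f. (\<forall>x y. f (x + y) = f x + f y) \<and> (\<forall>c x. f (sm c x) = c * f x) \<and>
                  (\<forall>x y. f (x * y) = f x * f y) \<and> (\<exists>x. f x \<noteq> 0)}"

definition weak_star :: "(complex \<Rightarrow> 'a::comm_ring_1 \<Rightarrow> 'a) \<Rightarrow> ('a \<Rightarrow> complex) topology" where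
  "weak_star sm = subtopology (product_topology (\<lambda>_. euclidean) UNIV) (Mstar sm)"

definition weakly_sigma_star_compact_regular ::
    "(complex \<Rightarrow> 'a::comm_ring_1 \<Rightarrow> 'a) \<Rightarrow> bool" where
  "weakly_sigma_star_compact_regular sm \<longleftrightarrow>
     (\<forall>K. compactin (weak_star sm) K \<and> K \<subset> Mstar sm \<longrightarrow>
        (\<exists>x. x \<noteq> 0 \<and> (\<forall>f\<in>K. f x = 0)))"

text \<open>Continuous nonzero multiplicative linear functionals on a subalgebra C of an
  algebra (with the induced topology); functionals are represented by functions on
  the ambient type, only their values on C matter.\<close>
definition M_sub :: "(complex \<Rightarrow> 'b::comm_ring_1 \<Rightarrow> 'b) \<Rightarrow> 'b topology \<Rightarrow> 'b set \<Rightarrow> ('b \<Rightarrow> complex) set" where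
  "M_sub sm T C = {f. (\<forall>x\<in>C. \<forall>y\<in>C. f (x + y) = f x + f y) \<and> (\<forall>c. \<forall>x\<in>C. f (sm c x) = c * f x) \<and>
                      (\<forall>x\<in>C. \<forall>y\<in>C. f (x * y) = f x * f y) \<and> (\<exists>x\<in>C. f x \<noteq> 0) \<and>
                      continuous_map (subtopology T C) euclidean f}"

definition strong_radical :: "(complex \<Rightarrow> 'b::comm_ring_1 \<Rightarrow> 'b) \<Rightarrow> 'b topology \<Rightarrow> 'b set \<Rightarrow> 'b set" where
  "strong_radical sm T C = {x\<in>C. \<forall>f\<in>M_sub sm T C. f x = 0}"

definition Q_sub :: "'b::comm_ring_1 topology \<Rightarrow> 'b set \<Rightarrow> bool" where
  "Q_sub T C \<longleftrightarrow> openin (subtopology T C) {x\<in>C. \<exists>y\<in>C. x * y = 1}"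

definition alg_hom :: "(complex \<Rightarrow> 'a::comm_ring_1 \<Rightarrow> 'a) \<Rightarrow> (complex \<Rightarrow> 'b::comm_ring_1 \<Rightarrow> 'b)
    \<Rightarrow> ('a \<Rightarrow> 'b) \<Rightarrow> bool" where
  "alg_hom smA smB \<Phi> \<longleftrightarrow>
     (\<forall>x y. \<Phi> (x + y) = \<Phi> x + \<Phi> y) \<and> (\<forall>c x. \<Phi> (smA c x) = smB c (\<Phi> x)) \<and>
     (\<forall>x y. \<Phi> (x * y) = \<Phi> x * \<Phi> y) \<and> \<Phi> 1 = 1"

end

theory Submission
  imports Defs "HOL-Computational_Algebra.Polynomial"
begin

text \<open>
  A uniform seminorm is submultiplicative, and a Zorn argument shrinks it to a multiplicative
  seminorm that still agrees with it at a prescribed point. By a Gelfand--Mazur argument every element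
  lies at distance zero from a unique scalar for such a seminorm, which yields a character whose absolute
  value is the seminorm. Hence every defining seminorm of \<open>A\<close> dominates, and is attained pointwise
  by, absolute values of characters.

  Since \<open>C\<close> is a Q-algebra, all continuous characters of \<open>C\<close> are bounded by one continuous
  seminorm \<open>Q\<close> of \<open>B\<close>; conversely a character \<open>g\<close> of \<open>A\<close> with \<open>|g| \<le> K Q \<circ> \<Phi>\<close> extends by
  continuity to a continuous character of \<open>C\<close>. So the characters \<open>f \<circ> \<Phi>\<close> are exactly the
  characters of \<open>A\<close> bounded by a multiple of \<open>Q \<circ> \<Phi>\<close>. Then (3) gives (1), as every seminorm of
  \<open>A\<close> is bounded by a multiple of \<open>Q \<circ> \<Phi>\<close>; (1) gives (2), since continuity of \<open>\<Phi>\<inverse>\<close> bounds a character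
  detecting \<open>x \<noteq> 0\<close> by a seminorm of \<open>B\<close>, so it extends to \<open>C\<close> without vanishing at \<open>\<Phi> x\<close>;
  and (2) gives (3), since these bounded characters form a weak* compact set, which weak
  \<open>\<sigma>\<^sup>*\<close>-compact-regularity forces to be all of \<open>M\<^sup>*(A)\<close> unless some \<open>\<Phi> x \<noteq> 0\<close> lies in the
  strong radical.
\<close>

context
  fixes sm :: "complex \<Rightarrow> 'a::comm_ring_1 \<Rightarrow> 'a"
  assumes calg: "calg sm"
begin

lemma calg_scale_add_right: "sm c (x + y) = sm c x + sm c y"
  using calg unfolding calg_def by blast

lemma calg_scale_add_left: "sm (c + d) x = sm c x + sm d x"
  using calg unfolding calg_def by blast

lemma calg_scale_scale: "sm (c * d) x = sm c (sm d x)"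
  using calg unfolding calg_def by blast

lemma calg_scale_one: "sm 1 x = x"
  using calg unfolding calg_def by blast

lemma calg_scale_mult_left: "sm c (x * y) = sm c x * y"
  using calg unfolding calg_def by blast

lemma calg_scale_mult_right: "sm c (x * y) = x * sm c y"
  using calg_scale_mult_left[of c y x] by (simp add: mult.commute)

lemma calg_scale_eq_mult: "sm c x = sm c 1 * x"
  using calg_scale_mult_left[of c 1 x] by simp

lemma calg_scale_zero_left: "sm 0 x = 0"
  using calg_scale_add_left[of 0 0 x] by simp

lemma calg_scale_minus_one: "sm (-1) x = - x"
proof -
  have "x + sm (-1) x = 0"
    using calg_scale_add_left[of 1 "-1" x] calg_scale_one calg_scale_zero_left by simp
  from add.inverse_unique[OF this] show ?thesis by simp
qed

lemma calg_scale_diff_right: "sm c (x - y) = sm c x - sm c y"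
  using calg_scale_eq_mult[of c "x - y"] calg_scale_eq_mult[of c x] calg_scale_eq_mult[of c y]
  by (simp add: algebra_simps)

lemma calg_scale_diff_left: "sm (c - d) x = sm c x - sm d x"
proof -
  have "sm (-d) x = - sm d x"
    using calg_scale_scale[of "-1" d x] calg_scale_minus_one by simp
  then show ?thesis using calg_scale_add_left[of c "-d" x] by simp
qed

lemma calg_scale_minus_left: "sm (- c) 1 = - sm c 1"
  using calg_scale_diff_left[of 0 c 1] calg_scale_zero_left by simp

lemma calg_scale_mult_one: "sm (c * d) 1 = sm c 1 * sm d 1"
  using calg_scale_scale[of c d 1] calg_scale_eq_mult[of c "sm d 1"] by simp

end

context
  fixes sm :: "complex \<Rightarrow> 'a::comm_ring_1 \<Rightarrow> 'a" and p :: "'a \<Rightarrow> real"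
  assumes sn: "seminorm sm p"
begin

lemma seminorm_nonneg: "0 \<le> p x"
  using sn unfolding seminorm_def by blast

lemma seminorm_triangle: "p (x + y) \<le> p x + p y"
  using sn unfolding seminorm_def by blast

lemma seminorm_scale: "p (sm c x) = cmod c * p x"
  using sn unfolding seminorm_def by blast

context
  assumes calg: "calg sm"
begin

lemma seminorm_zero: "p 0 = 0"
  using seminorm_scale[of 0 0] calg_scale_zero_left[OF calg, of 0] by simp

lemma seminorm_minus: "p (- x) = p x"
  using seminorm_scale[of "-1" x] calg_scale_minus_one[OF calg, of x] by simp

lemma seminorm_diff_le: "p (x - y) \<le> p x + p y"
  using seminorm_triangle[of x "-y"] seminorm_minus[of y] by simp

lemma seminorm_diff_commute: "p (x - y) = p (y - x)"
  using seminorm_minus[of "y - x"] by simp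

lemma seminorm_diff_triangle: "p (x - z) \<le> p (x - y) + p (y - z)"
  using seminorm_triangle[of "x - y" "y - z"] by simp

lemma seminorm_reverse_triangle: "\<bar>p x - p y\<bar> \<le> p (x - y)"
  using seminorm_triangle[of "x - y" y] seminorm_triangle[of "y - x" x]
    seminorm_diff_commute[of x y]
  by simp

end

end

section \<open>Uniform seminorms are submultiplicative\<close>

lemma le_zero_if_le_inverse_sq:
  fixes b c :: real
  assumes "\<And>t. t > 0 \<Longrightarrow> c \<le> (b / t)\<^sup>2 / 2" and "0 \<le> b"
  shows "c \<le> 0"
proof (rule ccontr)
  assume "\<not> c \<le> 0"
  then have c: "c > 0" by simp
  define t where "t = (b + 1) / sqrt c"
  have t: "t > 0" using c \<open>0 \<le> b\<close> by (simp add: t_def)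
  have "b / t < sqrt c" using c \<open>0 \<le> b\<close> by (simp add: t_def field_simps)
  then have "(b / t)\<^sup>2 < c"
    using \<open>0 \<le> b\<close> t c by (metis divide_nonneg_pos power_strict_mono real_sqrt_pow2 less_eq_real_def
        zero_less_numeral)
  then show False using assms(1)[OF t] c by simp
qed

lemma le_two_mult_if_le_scaled_sum_sq:
  fixes a b c :: real
  assumes le: "\<And>t. t > 0 \<Longrightarrow> c \<le> (t * a + b / t)\<^sup>2 / 2" and "0 \<le> a" "0 \<le> b"
  shows "c \<le> 2 * a * b"
proof -
  consider "a > 0" "b > 0" | "a = 0" | "b = 0" using assms(2,3) by linarith
  then show ?thesis
  proof cases
    case 1
    define t where "t = sqrt (b / a)"
    have t: "t > 0" using 1 by (simp add: t_def)
    have "t * a = sqrt (a * b)" and "b / t = sqrt (a * b)"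
      using 1 t by (simp_all add: t_def real_sqrt_divide real_sqrt_mult field_simps)
    then show ?thesis using le[OF t] 1 by (simp add: power2_eq_square)
  next
    case 2
    then show ?thesis using le le_zero_if_le_inverse_sq[of c b] \<open>0 \<le> b\<close> by simp
  next
    case 3
    have "c \<le> (a / t)\<^sup>2 / 2" if "t > 0" for t
      using le[of "1 / t"] that 3 by simp
    then show ?thesis using le_zero_if_le_inverse_sq[of c a] \<open>0 \<le> a\<close> 3 by simp
  qed
qed

lemma uniform_seminorm_seminorm: "uniform_seminorm sm p \<Longrightarrow> seminorm sm p"
  unfolding uniform_seminorm_def by blast

lemma uniform_seminorm_square: "uniform_seminorm sm p \<Longrightarrow> p (x * x) = (p x)\<^sup>2"
  unfolding uniform_seminorm_def by blast

context
  fixes sm :: "complex \<Rightarrow> 'a::comm_ring_1 \<Rightarrow> 'a" and p :: "'a \<Rightarrow> real"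
  assumes calg: "calg sm" and u: "uniform_seminorm sm p"
begin

private lemma seminorm_p: "seminorm sm p"
  using u by (rule uniform_seminorm_seminorm)

text \<open>Polarization: \<open>4 x y = (x + y)\<^sup>2 - (x - y)\<^sup>2\<close>.\<close>

lemma uniform_seminorm_mult_le_sum_sq: "p (x * y) \<le> (p x + p y)\<^sup>2 / 2"
proof -
  define w where "w = x * y"
  have "(x + y) * (x + y) - (x - y) * (x - y) = w + w + w + w"
    by (simp add: algebra_simps w_def)
  then have "sm (1/4) ((x + y) * (x + y) - (x - y) * (x - y)) = sm (1/4 + 1/4 + 1/4 + 1/4) w"
    by (simp only: calg_scale_add_right[OF calg] calg_scale_add_left[OF calg])
  then have polar: "x * y = sm (1/4) ((x + y) * (x + y) - (x - y) * (x - y))"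
    by (simp add: calg_scale_one[OF calg] w_def)
  have "p (x * y) \<le> (1/4) * (p ((x + y) * (x + y)) + p ((x - y) * (x - y)))"
    by (subst polar, subst seminorm_scale[OF seminorm_p])
      (simp add: seminorm_diff_le[OF seminorm_p calg])
  also have "\<dots> = (1/4) * ((p (x + y))\<^sup>2 + (p (x - y))\<^sup>2)"
    using uniform_seminorm_square[OF u] by simp
  also have "\<dots> \<le> (1/4) * ((p x + p y)\<^sup>2 + (p x + p y)\<^sup>2)"
    using seminorm_triangle[OF seminorm_p] seminorm_diff_le[OF seminorm_p calg]
      seminorm_nonneg[OF seminorm_p]
    by (intro mult_left_mono add_mono power_mono) auto
  finally show ?thesis by simp
qed

lemma uniform_seminorm_mult_le_two_mult: "p (x * y) \<le> 2 * p x * p y"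
proof (rule le_two_mult_if_le_scaled_sum_sq)
  fix t :: real assume t: "t > 0"
  have "sm (of_real t) x * sm (of_real (1 / t)) y = sm (of_real t) (sm (of_real (1 / t)) (x * y))"
    using calg_scale_mult_left[OF calg] calg_scale_mult_right[OF calg] by metis
  also have "\<dots> = x * y"
    using t by (simp flip: calg_scale_scale[OF calg] of_real_mult add: calg_scale_one[OF calg])
  finally have "p (x * y) \<le> (p (sm (of_real t) x) + p (sm (of_real (1 / t)) y))\<^sup>2 / 2"
    using uniform_seminorm_mult_le_sum_sq by metis
  then show "p (x * y) \<le> (t * p x + p y / t)\<^sup>2 / 2"
    using t by (simp add: seminorm_scale[OF seminorm_p] norm_divide)
qed (use seminorm_nonneg[OF seminorm_p] in auto)

lemma uniform_seminorm_power_two_power: "p (w ^ (2 ^ k)) = p w ^ (2 ^ k)"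
proof (induction k)
  case (Suc k)
  have "w ^ (2 ^ Suc k) = w ^ (2 ^ k) * w ^ (2 ^ k)"
    by (simp flip: power_add add: mult_2)
  then show ?case
    using Suc uniform_seminorm_square[OF u] by (simp flip: power_mult add: mult.commute)
qed simp

text \<open>Applying the factor-2 bound to \<open>x^(2^k)\<close> and \<open>y^(2^k)\<close> and taking \<open>2^k\<close>-th roots
  makes the factor disappear.\<close>

lemma uniform_seminorm_mult_le: "p (x * y) \<le> p x * p y"
proof (rule ccontr)
  assume "\<not> ?thesis"
  then have ab: "p (x * y) > p x * p y" by simp
  have key: "p (x * y) ^ (2 ^ k) \<le> 2 * (p x * p y) ^ (2 ^ k)" for k
  proof -
    have "p (x * y) ^ (2 ^ k) = p (x ^ (2 ^ k) * y ^ (2 ^ k))"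
      by (simp add: uniform_seminorm_power_two_power flip: power_mult_distrib)
    also have "\<dots> \<le> 2 * (p x * p y) ^ (2 ^ k)"
      using uniform_seminorm_mult_le_two_mult[of "x ^ (2 ^ k)" "y ^ (2 ^ k)"]
      by (simp add: uniform_seminorm_power_two_power power_mult_distrib mult.assoc)
    finally show ?thesis .
  qed
  show False
  proof (cases "p x * p y = 0")
    case True
    then show False using key[of 0] ab by auto
  next
    case False
    then have b: "p x * p y > 0"
      using seminorm_nonneg[OF seminorm_p, of x] seminorm_nonneg[OF seminorm_p, of y] by simp
    define r where "r = p (x * y) / (p x * p y)"
    have r1: "r > 1" using ab b by (simp add: r_def)
    obtain n where n: "2 < r ^ n" using real_arch_pow[OF r1] by blast
    have "r ^ n \<le> r ^ (2 ^ n)" using r1 by (intro power_increasing) auto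
    also have "r ^ (2 ^ n) \<le> 2" using key[of n] b by (simp add: r_def power_divide pos_divide_le_eq)
    finally show False using n by simp
  qed
qed

lemma uniform_seminorm_one_cases: "p 1 = 1 \<or> p 1 = 0"
  using uniform_seminorm_square[OF u, of 1] by (simp add: power2_eq_square) blast

lemma uniform_seminorm_power_le: "p 1 = 1 \<Longrightarrow> p (w ^ n) \<le> p w ^ n"
proof (induction n)
  case (Suc n)
  have "p (w ^ Suc n) \<le> p w * p (w ^ n)" using uniform_seminorm_mult_le by simp
  also have "\<dots> \<le> p w * p w ^ n"
    using Suc seminorm_nonneg[OF seminorm_p] by (intro mult_left_mono) auto
  finally show ?case by simp
qed simp

lemma uniform_seminorm_power:
  assumes p1: "p 1 = 1"
  shows "p (w ^ n) = p w ^ n"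
proof (rule antisym)
  show "p (w ^ n) \<le> p w ^ n" by (rule uniform_seminorm_power_le[OF p1])
  show "p w ^ n \<le> p (w ^ n)"
  proof (cases "p w = 0")
    case True
    then show ?thesis using seminorm_nonneg[OF seminorm_p] p1 by (cases n) auto
  next
    case False
    then have pw: "p w > 0" using seminorm_nonneg[OF seminorm_p, of w] by simp
    define N where "N = (2::nat) ^ n"
    have nN: "n \<le> N" unfolding N_def by (simp add: less_imp_le)
    have "p w ^ N = p (w ^ n * w ^ (N - n))"
      using nN by (simp add: uniform_seminorm_power_two_power N_def flip: power_add)
    also have "\<dots> \<le> p (w ^ n) * p w ^ (N - n)"
      using uniform_seminorm_mult_le uniform_seminorm_power_le[OF p1] seminorm_nonneg[OF seminorm_p]
      by (meson mult_left_mono order_trans)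
    finally have "p w ^ n * p w ^ (N - n) \<le> p (w ^ n) * p w ^ (N - n)"
      using nN by (simp flip: power_add)
    then show ?thesis using pw by simp
  qed
qed

end

section \<open>Multiplicative seminorms below a uniform seminorm\<close>

definition power_limit_seminorm :: "('a::comm_ring_1 \<Rightarrow> real) \<Rightarrow> 'a \<Rightarrow> 'a \<Rightarrow> real" where
  "power_limit_seminorm q a y = lim (\<lambda>n. q (a ^ n * y) / q a ^ n)"

context
  fixes sm :: "complex \<Rightarrow> 'a::comm_ring_1 \<Rightarrow> 'a" and q :: "'a \<Rightarrow> real" and a :: 'a
  assumes calg: "calg sm" and u: "uniform_seminorm sm q" and qa: "q a > 0"
begin

private lemma seminorm_q: "seminorm sm q"
  using u by (rule uniform_seminorm_seminorm)

lemma power_limit_seminorm_decseq: "decseq (\<lambda>n. q (a ^ n * y) / q a ^ n)"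
proof (rule decseq_SucI)
  fix n
  have "q (a ^ Suc n * y) \<le> q a * q (a ^ n * y)"
    using uniform_seminorm_mult_le[OF calg u, of a "a ^ n * y"] by (simp add: mult.assoc)
  then show "q (a ^ Suc n * y) / q a ^ Suc n \<le> q (a ^ n * y) / q a ^ n"
    using qa by (simp add: field_simps)
qed

lemma power_limit_seminorm_LIMSEQ:
  "(\<lambda>n. q (a ^ n * y) / q a ^ n) \<longlonglongrightarrow> power_limit_seminorm q a y"
  and power_limit_seminorm_le: "power_limit_seminorm q a y \<le> q (a ^ n * y) / q a ^ n"
proof -
  have "\<forall>i. 0 \<le> q (a ^ i * y) / q a ^ i" using seminorm_nonneg[OF seminorm_q] qa by simp
  with power_limit_seminorm_decseq obtain L
    where L: "(\<lambda>n. q (a ^ n * y) / q a ^ n) \<longlonglongrightarrow> L" "\<forall>i. L \<le> q (a ^ i * y) / q a ^ i"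
    by (rule decseq_convergent)
  moreover have "power_limit_seminorm q a y = L"
    using limI[OF L(1)] by (simp add: power_limit_seminorm_def)
  ultimately show "(\<lambda>n. q (a ^ n * y) / q a ^ n) \<longlonglongrightarrow> power_limit_seminorm q a y"
    and "power_limit_seminorm q a y \<le> q (a ^ n * y) / q a ^ n" by simp_all
qed

lemma power_limit_seminorm_le_self: "power_limit_seminorm q a y \<le> q y"
  using power_limit_seminorm_le[of y 0] by simp

lemma uniform_seminorm_power_limit_seminorm: "uniform_seminorm sm (power_limit_seminorm q a)"
proof -
  note L = power_limit_seminorm_LIMSEQ
  have nonneg: "0 \<le> power_limit_seminorm q a y" for y
    using seminorm_nonneg[OF seminorm_q] qa by (intro LIMSEQ_le_const[OF L]) auto
  have triangle: "power_limit_seminorm q a (y + z)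
      \<le> power_limit_seminorm q a y + power_limit_seminorm q a z"
    for y z
  proof (rule LIMSEQ_le[OF L tendsto_add[OF L L]])
    show "\<exists>N. \<forall>n\<ge>N. q (a ^ n * (y + z)) / q a ^ n \<le> q (a ^ n * y) / q a ^ n + q (a ^ n * z) / q a ^ n"
      using seminorm_triangle[OF seminorm_q] qa
      by (auto simp: distrib_left add_divide_distrib[symmetric] divide_right_mono)
  qed
  have scale: "power_limit_seminorm q a (sm c y) = cmod c * power_limit_seminorm q a y" for c y
  proof -
    have "(\<lambda>n. q (a ^ n * sm c y) / q a ^ n) = (\<lambda>n. cmod c * (q (a ^ n * y) / q a ^ n))"
      by (simp add: fun_eq_iff seminorm_scale[OF seminorm_q] flip: calg_scale_mult_right[OF calg])
    then have "(\<lambda>n. q (a ^ n * sm c y) / q a ^ n) \<longlonglongrightarrow> cmod c * power_limit_seminorm q a y"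
      using tendsto_mult_left[OF L[of y]] by simp
    then show ?thesis using L[of "sm c y"] by (rule LIMSEQ_unique[rotated])
  qed
  have square: "power_limit_seminorm q a (y * y) = (power_limit_seminorm q a y)\<^sup>2" for y
  proof -
    have "q (a ^ (2 * n) * (y * y)) / q a ^ (2 * n) = (q (a ^ n * y) / q a ^ n)\<^sup>2" for n
    proof -
      have "a ^ (2 * n) * (y * y) = (a ^ n * y) * (a ^ n * y)"
        by (simp add: power_mult mult_ac power2_eq_square)
      then show ?thesis
        using uniform_seminorm_square[OF u] by (simp add: power_mult power_divide mult.commute)
    qed
    moreover have "(\<lambda>n. q (a ^ (2 * n) * (y * y)) / q a ^ (2 * n)) \<longlonglongrightarrow> power_limit_seminorm q a (y * y)"
      using LIMSEQ_subseq_LIMSEQ[OF L, of "\<lambda>n. 2 * n"] by (simp add: strict_mono_def o_def)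
    ultimately show ?thesis using tendsto_power[OF L[of y], of 2] LIMSEQ_unique by simp
  qed
  show ?thesis
    unfolding uniform_seminorm_def seminorm_def using nonneg triangle scale square by blast
qed

end

context
  fixes C :: "('a::plus \<Rightarrow> real) set"
  assumes ne: "C \<noteq> {}" and nonneg: "\<And>q y. q \<in> C \<Longrightarrow> 0 \<le> q y"
begin

private lemma bdd_below_values: "bdd_below ((\<lambda>q. q y) ` C)"
  unfolding bdd_below_def using nonneg by blast

lemma INF_values_le: "q \<in> C \<Longrightarrow> (INF q\<in>C. q y) \<le> q y"
  by (rule cINF_lower[OF bdd_below_values])

private lemma le_INF_values: "(\<And>q. q \<in> C \<Longrightarrow> t \<le> q y) \<Longrightarrow> t \<le> (INF q\<in>C. q y)"
  using ne by (rule cINF_greatest)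

lemma INF_values_nonneg: "0 \<le> (INF q\<in>C. q y)"
  using nonneg by (intro le_INF_values)

lemma INF_values_subadditive_chain:
  assumes chain: "\<And>q1 q2. q1 \<in> C \<Longrightarrow> q2 \<in> C \<Longrightarrow> (\<forall>y. q1 y \<le> q2 y) \<or> (\<forall>y. q2 y \<le> q1 y)"
    and subadditive: "\<And>q. q \<in> C \<Longrightarrow> q (y + z) \<le> q y + q z"
  shows "(INF q\<in>C. q (y + z)) \<le> (INF q\<in>C. q y) + (INF q\<in>C. q z)"
proof -
  have "(INF q\<in>C. q (y + z)) - q1 y \<le> q2 z" if q12: "q1 \<in> C" "q2 \<in> C" for q1 q2
  proof -
    obtain q where q: "q \<in> C" "q y \<le> q1 y" "q z \<le> q2 z"
      using chain[OF q12] q12 by fastforce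
    then show ?thesis using INF_values_le[OF q(1), of "y + z"] subadditive[OF q(1)] by linarith
  qed
  then have "(INF q\<in>C. q (y + z)) - q1 y \<le> (INF q\<in>C. q z)" if "q1 \<in> C" for q1
    using that by (intro le_INF_values) auto
  then have "(INF q\<in>C. q (y + z)) - (INF q\<in>C. q z) \<le> (INF q\<in>C. q y)"
    by (intro le_INF_values) force
  then show ?thesis by simp
qed

lemma INF_values_homogeneous:
  assumes c: "0 \<le> c" and hom: "\<And>q. q \<in> C \<Longrightarrow> q w = c * q y"
  shows "(INF q\<in>C. q w) = c * (INF q\<in>C. q y)"
proof (cases "c = 0")
  case True
  obtain q where q: "q \<in> C" using ne by blast
  then show ?thesis
    using INF_values_le[OF q, of w] INF_values_nonneg[of w] hom[OF q] True by simp
next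
  case False
  then have c: "c > 0" using c by simp
  have "(INF q\<in>C. q w) / c \<le> (INF q\<in>C. q y)"
    using INF_values_le hom c by (intro le_INF_values) (simp add: divide_le_eq mult.commute)
  moreover have "c * (INF q\<in>C. q y) \<le> (INF q\<in>C. q w)"
  proof (rule le_INF_values)
    fix q assume q: "q \<in> C"
    show "c * (INF q\<in>C. q y) \<le> q w"
      using INF_values_le[OF q, of y] hom[OF q] c by (simp add: mult_left_mono)
  qed
  ultimately show ?thesis using c by (simp add: field_simps)
qed

lemma INF_values_square:
  assumes square: "\<And>q. q \<in> C \<Longrightarrow> q w = (q y)\<^sup>2"
  shows "(INF q\<in>C. q w) = (INF q\<in>C. q y)\<^sup>2"
proof (rule antisym)
  have "sqrt (INF q\<in>C. q w) \<le> q y" if q: "q \<in> C" for q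
  proof -
    have "sqrt (INF q\<in>C. q w) \<le> sqrt ((q y)\<^sup>2)"
      using INF_values_le[OF q, of w] square[OF q] by (intro real_sqrt_le_mono) simp
    then show ?thesis using nonneg[OF q, of y] by simp
  qed
  then have "sqrt (INF q\<in>C. q w) \<le> (INF q\<in>C. q y)" by (intro le_INF_values)
  then have "(sqrt (INF q\<in>C. q w))\<^sup>2 \<le> (INF q\<in>C. q y)\<^sup>2"
    using INF_values_nonneg[of w] by (intro power_mono) simp_all
  then show "(INF q\<in>C. q w) \<le> (INF q\<in>C. q y)\<^sup>2" using INF_values_nonneg[of w] by simp
  have "(INF q\<in>C. q y)\<^sup>2 \<le> q w" if q: "q \<in> C" for q
    using INF_values_le[OF q, of y] INF_values_nonneg[of y] square[OF q] by (simp add: power_mono)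
  then show "(INF q\<in>C. q y)\<^sup>2 \<le> (INF q\<in>C. q w)" by (intro le_INF_values)
qed

end

lemma uniform_seminorm_INF_chain:
  fixes sm :: "complex \<Rightarrow> 'a::comm_ring_1 \<Rightarrow> 'a"
  assumes ne: "C \<noteq> {}" and u: "\<And>q. q \<in> C \<Longrightarrow> uniform_seminorm sm q"
    and chain: "\<And>q1 q2. q1 \<in> C \<Longrightarrow> q2 \<in> C \<Longrightarrow> (\<forall>y. q1 y \<le> q2 y) \<or> (\<forall>y. q2 y \<le> q1 y)"
  shows "uniform_seminorm sm (\<lambda>y. INF q\<in>C. q y)"
proof -
  have sn: "q \<in> C \<Longrightarrow> seminorm sm q" for q using u uniform_seminorm_seminorm by blast
  have nonneg: "\<And>q y. q \<in> C \<Longrightarrow> 0 \<le> q y" using seminorm_nonneg[OF sn] by blast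
  have "0 \<le> (INF q\<in>C. q y)" for y
    by (rule INF_values_nonneg) (use ne nonneg in auto)
  moreover have "(INF q\<in>C. q (y + z)) \<le> (INF q\<in>C. q y) + (INF q\<in>C. q z)" for y z
    by (rule INF_values_subadditive_chain) (use ne nonneg chain seminorm_triangle[OF sn] in auto)
  moreover have "(INF q\<in>C. q (sm c y)) = cmod c * (INF q\<in>C. q y)" for c y
    by (rule INF_values_homogeneous) (use ne nonneg seminorm_scale[OF sn] in auto)
  moreover have "(INF q\<in>C. q (y * y)) = (INF q\<in>C. q y)\<^sup>2" for y
    by (rule INF_values_square) (use ne nonneg uniform_seminorm_square[OF u] in auto)
  ultimately show ?thesis unfolding uniform_seminorm_def seminorm_def by blast
qed

definition dominated_uniform_seminorms ::
    "(complex \<Rightarrow> 'a::comm_ring_1 \<Rightarrow> 'a) \<Rightarrow> ('a \<Rightarrow> real) \<Rightarrow> 'a \<Rightarrow> ('a \<Rightarrow> real) set" where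
  "dominated_uniform_seminorms sm p x = {q. uniform_seminorm sm q \<and> (\<forall>y. q y \<le> p y) \<and> q x = p x}"

lemma minimal_dominated_uniform_seminorm_exists:
  assumes calg: "calg sm" and u: "uniform_seminorm sm p"
  shows "\<exists>m\<in>dominated_uniform_seminorms sm p x.
           \<forall>q\<in>dominated_uniform_seminorms sm p x. (\<forall>y. q y \<le> m y) \<longrightarrow> q = m"
proof -
  define D where "D = dominated_uniform_seminorms sm p x"
  define below where "below = (\<lambda>(q1::'a \<Rightarrow> real) q2. \<forall>y. q2 y \<le> q1 y)"
  have po: "partial_order_on D (relation_of below D)"
    by (rule partial_order_on_relation_ofI) (auto simp: below_def fun_eq_iff intro: order_trans
      antisym)
  have "\<exists>q\<in>D. \<forall>q'\<in>C. below q' q" if C: "C \<in> Chains (relation_of below D)" for C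
  proof (cases "C = {}")
    case True
    then show ?thesis using u by (auto simp: D_def dominated_uniform_seminorms_def)
  next
    case False
    have CD: "C \<subseteq> D" using Chains_relation_of[OF C] .
    have chain: "(\<forall>y. q1 y \<le> q2 y) \<or> (\<forall>y. q2 y \<le> q1 y)" if "q1 \<in> C" "q2 \<in> C" for q1 q2
      using C that by (auto simp: Chains_def relation_of_def below_def)
    have u_C: "uniform_seminorm sm q" if "q \<in> C" for q
      using CD that by (auto simp: D_def dominated_uniform_seminorms_def)
    define q0 where "q0 y = (INF q\<in>C. q y)" for y
    have lower: "q0 y \<le> q y" if "q \<in> C" for q y
      unfolding q0_def
      by (rule INF_values_le) (use False that seminorm_nonneg[OF uniform_seminorm_seminorm[OF u_C]] in auto)
    obtain q1 where q1: "q1 \<in> C" using False by blast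
    have in_D: "q \<in> C \<Longrightarrow> (\<forall>y. q y \<le> p y) \<and> q x = p x" for q
      using CD by (auto simp: D_def dominated_uniform_seminorms_def)
    have "uniform_seminorm sm q0"
      unfolding q0_def by (rule uniform_seminorm_INF_chain[OF False u_C chain])
    moreover have "q0 y \<le> p y" for y
      using lower[OF q1, of y] in_D[OF q1] by (meson order_trans)
    moreover have "q0 x = p x"
    proof -
      have "q0 x = (INF q\<in>C. p x)" unfolding q0_def using in_D by (intro INF_cong) auto
      then show ?thesis using False by simp
    qed
    ultimately have "q0 \<in> D" by (simp add: D_def dominated_uniform_seminorms_def)
    then show ?thesis using lower by (auto simp: below_def)
  qed
  from predicate_Zorn[OF po this] obtain m where "m \<in> D" "\<forall>q\<in>D. below m q \<longrightarrow> q = m" by blast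
  then show ?thesis by (auto simp: D_def below_def)
qed

text \<open>If \<open>m\<close> is minimal, replacing it by its power-limit seminorm at \<open>a\<close> cannot make it smaller,
  so \<open>m\<close> already satisfies \<open>m y \<le> m (a * y) / m a\<close>.\<close>

lemma minimal_dominated_uniform_seminorm_mult:
  assumes calg: "calg sm" and m: "m \<in> dominated_uniform_seminorms sm p x"
    and minimal: "\<forall>q\<in>dominated_uniform_seminorms sm p x. (\<forall>y. q y \<le> m y) \<longrightarrow> q = m"
    and ma: "m a > 0" and powers: "\<And>n. m (a ^ n * x) = m a ^ n * m x"
  shows "m (a * y) = m a * m y"
proof -
  have u: "uniform_seminorm sm m" and le_p: "\<forall>y. m y \<le> p y" and mx: "m x = p x"
    using m by (auto simp: dominated_uniform_seminorms_def)
  have "(\<lambda>n. m (a ^ n * x) / m a ^ n) \<longlonglongrightarrow> m x"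
    using powers ma by simp
  then have "power_limit_seminorm m a x = m x"
    using power_limit_seminorm_LIMSEQ[OF calg u ma, of x] LIMSEQ_unique by blast
  then have "power_limit_seminorm m a \<in> dominated_uniform_seminorms sm p x"
    using uniform_seminorm_power_limit_seminorm[OF calg u ma] le_p mx
      power_limit_seminorm_le_self[OF calg u ma] order_trans
    unfolding dominated_uniform_seminorms_def by fastforce
  then have "power_limit_seminorm m a = m"
    using minimal power_limit_seminorm_le_self[OF calg u ma] by blast
  then have "m y \<le> m (a * y) / m a"
    using power_limit_seminorm_le[OF calg u ma, of y 1] by simp
  then have "m a * m y \<le> m (a * y)" using ma by (simp add: field_simps)
  then show ?thesis using uniform_seminorm_mult_le[OF calg u] by (simp add: antisym)
qed

text \<open>Minimality is applied twice: first with \<open>a = x\<close>, which makes \<open>x\<close> multiplicative, and then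
  for arbitrary \<open>a\<close>, where \<open>m (a^n x) = m a^n m x\<close> now follows.\<close>

lemma multiplicative_seminorm_below_uniform_seminorm:
  assumes calg: "calg sm" and u: "uniform_seminorm sm p" and px: "p x > 0"
  shows "\<exists>m. seminorm sm m \<and> (\<forall>y. m y \<le> p y) \<and> m x = p x \<and> (\<forall>a y. m (a * y) = m a * m y)"
proof -
  obtain m where m: "m \<in> dominated_uniform_seminorms sm p x"
    and minimal: "\<forall>q\<in>dominated_uniform_seminorms sm p x. (\<forall>y. q y \<le> m y) \<longrightarrow> q = m"
    using minimal_dominated_uniform_seminorm_exists[OF calg u] by blast
  have um: "uniform_seminorm sm m" and le_p: "\<forall>y. m y \<le> p y" and mx: "m x = p x"
    using m by (auto simp: dominated_uniform_seminorms_def)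
  note mult = minimal_dominated_uniform_seminorm_mult[OF calg m minimal]
  have "m 1 = 1"
    using uniform_seminorm_one_cases[OF calg um] uniform_seminorm_mult_le[OF calg um, of x 1] mx px
    by auto
  then have power: "m (w ^ n) = m w ^ n" for w n by (rule uniform_seminorm_power[OF calg um])
  have mult_x: "m (x * y) = m x * m y" for y
  proof (rule mult)
    show "m x > 0" using mx px by simp
    show "m (x ^ n * x) = m x ^ n * m x" for n using power[of x "Suc n"] by (simp add: mult.commute)
  qed
  have "m (a * y) = m a * m y" for a y
  proof (cases "m a > 0")
    case True
    show ?thesis
    proof (rule mult[OF True])
      show "m (a ^ n * x) = m a ^ n * m x" for n
        using mult_x[of "a ^ n"] power[of a n] by (simp add: mult.commute)
    qed
  next
    case False
    then have "m a = 0" using seminorm_nonneg[OF uniform_seminorm_seminorm[OF um], of a] by simp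
    then show ?thesis
      using uniform_seminorm_mult_le[OF calg um, of a y]
        seminorm_nonneg[OF uniform_seminorm_seminorm[OF um], of "a * y"]
      by simp
  qed
  then show ?thesis using uniform_seminorm_seminorm[OF um] le_p mx by blast
qed

section \<open>A Gelfand--Mazur argument\<close>

definition unit_root :: "nat \<Rightarrow> nat \<Rightarrow> complex" where
  "unit_root n k = exp (2 * of_real pi * \<i> * of_nat k / of_nat n)"

lemma unit_root_power: "n \<noteq> 0 \<Longrightarrow> unit_root n k ^ n = 1"
  unfolding unit_root_def by (rule complex_root_unity)

lemma inj_on_unit_root: "n \<ge> 1 \<Longrightarrow> inj_on (unit_root n) {..<n}"
  unfolding unit_root_def inj_on_def using complex_root_unity_eq by auto

lemma unit_root_0 [simp]: "unit_root n 0 = 1"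
  by (simp add: unit_root_def)

lemma degree_monom_minus_prod_linear_less:
  fixes c :: complex
  assumes n: "n \<ge> 1"
  shows "degree (monom 1 n - [:c:] - (\<Prod>k<n. [:- a k, 1:])) < n"
proof -
  define P where "P = (\<Prod>k<n. [:- a k, 1:])"
  define T where "T = monom (1::complex) n - [:c:]"
  have "degree P = n" unfolding P_def by (subst degree_prod_eq_sum_degree) auto
  moreover have "lead_coeff P = 1" unfolding P_def by (simp add: lead_coeff_prod)
  moreover have "degree T = n"
  proof -
    have "T = monom 1 n + [:- c:]" by (simp add: T_def)
    also have "degree \<dots> = degree (monom (1::complex) n)"
      using n by (intro degree_add_eq_left) (simp add: degree_monom_eq)
    finally show ?thesis by (simp add: degree_monom_eq)
  qed
  moreover have "coeff T n = 1" using n by (cases n) (simp_all add: T_def)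
  ultimately have "degree (T - P) \<le> n" "coeff (T - P) n = 0"
    by (auto intro: degree_diff_le)
  then show ?thesis
    unfolding P_def T_def
    by (metis le_neq_implies_less leading_coeff_0_iff degree_0 n not_one_le_zero)
qed

text \<open>The \<open>n\<close> distinct roots \<open>\<mu> \<omega>\<^sup>k\<close> of the polynomial of degree \<open>< n\<close> force it to vanish.\<close>

lemma prod_linear_unit_roots:
  fixes \<mu> :: complex
  assumes n: "n \<ge> 1"
  shows "(\<Prod>k<n. [:- (\<mu> * unit_root n k), 1:]) = monom 1 n - [:\<mu> ^ n:]"
proof (cases "\<mu> = 0")
  case True
  then show ?thesis using n by (simp add: monom_altdef)
next
  case False
  define D where "D = monom 1 n - [:\<mu> ^ n:] - (\<Prod>k<n. [:- (\<mu> * unit_root n k), 1:])"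
  have roots: "poly D (\<mu> * unit_root n k) = 0" if "k < n" for k
    using that n unit_root_power[of n k]
    by (simp add: D_def poly_prod poly_monom power_mult_distrib prod_zero_iff) blast
  show ?thesis
  proof (rule ccontr)
    assume "\<not> ?thesis"
    then have D0: "D \<noteq> 0" by (simp add: D_def)
    have "inj_on (\<lambda>k. \<mu> * unit_root n k) {..<n}"
      using inj_on_unit_root[OF n] False by (auto simp: inj_on_def)
    then have "n = card ((\<lambda>k. \<mu> * unit_root n k) ` {..<n})" by (simp add: card_image)
    also have "\<dots> \<le> card {x. poly D x = 0}"
      using roots poly_roots_finite[OF D0] by (intro card_mono) auto
    also have "\<dots> \<le> degree D" by (rule card_poly_roots_bound[OF D0])
    also have "\<dots> < n" unfolding D_def by (rule degree_monom_minus_prod_linear_less[OF n])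
    finally show False by simp
  qed
qed

definition poly_eval :: "(complex \<Rightarrow> 'a::comm_ring_1 \<Rightarrow> 'a) \<Rightarrow> 'a \<Rightarrow> complex poly \<Rightarrow> 'a" where
  "poly_eval sm z P = poly (map_poly (\<lambda>c. sm c 1) P) z"

context
  fixes sm :: "complex \<Rightarrow> 'a::comm_ring_1 \<Rightarrow> 'a"
  assumes calg: "calg sm"
begin

lemma poly_eval_add: "poly_eval sm z (P + Q) = poly_eval sm z P + poly_eval sm z Q"
proof -
  have "map_poly (\<lambda>c. sm c 1) (P + Q) = map_poly (\<lambda>c. sm c 1) P + map_poly (\<lambda>c. sm c 1) Q"
    by (rule poly_eqI)
      (simp add: coeff_map_poly calg_scale_zero_left[OF calg] calg_scale_add_left[OF calg])
  then show ?thesis by (simp add: poly_eval_def)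
qed

lemma poly_eval_smult: "poly_eval sm z (smult a P) = sm a 1 * poly_eval sm z P"
proof -
  have "map_poly (\<lambda>c. sm c 1) (smult a P) = smult (sm a 1) (map_poly (\<lambda>c. sm c 1) P)"
    by (rule map_poly_smult) (simp_all add: calg_scale_zero_left[OF calg]
      calg_scale_mult_one[OF calg])
  then show ?thesis by (simp add: poly_eval_def)
qed

lemma poly_eval_pCons: "poly_eval sm z (pCons a P) = sm a 1 + z * poly_eval sm z P"
  by (simp add: poly_eval_def map_poly_pCons calg_scale_zero_left[OF calg])

lemma poly_eval_const: "poly_eval sm z [:a:] = sm a 1"
  using poly_eval_pCons[of z a 0] by (simp add: poly_eval_def)

lemma poly_eval_linear_mult: "poly_eval sm z ([:- a, 1:] * P) = (z - sm a 1) * poly_eval sm z P"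
proof -
  have "[:- a, 1:] * P = smult (- a) P + pCons 0 P" by simp
  then show ?thesis
    by (simp only: poly_eval_add poly_eval_smult poly_eval_pCons)
      (simp add: calg_scale_minus_left[OF calg] calg_scale_zero_left[OF calg] algebra_simps)
qed

lemma poly_eval_prod_linear:
  fixes n :: nat
  shows "poly_eval sm z (\<Prod>k<n. [:- a k, 1:]) = (\<Prod>k<n. z - sm (a k) 1)"
proof (induction n)
  case 0
  then show ?case using poly_eval_const[of z 1] calg_scale_one[OF calg] by (simp add: one_pCons)
next
  case (Suc n)
  then show ?case using poly_eval_linear_mult[of z "a n"] by (simp add: mult.commute)
qed

lemma poly_eval_monom_minus_const: "poly_eval sm z (monom 1 n - [:b:]) = z ^ n - sm b 1"
proof -
  have "monom 1 n - [:b:] = monom 1 n + [:- b:]" by simp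
  then have "poly_eval sm z (monom 1 n - [:b:]) = poly_eval sm z (monom 1 n) + poly_eval sm z [:- b:]"
    by (simp only: poly_eval_add)
  moreover have "poly_eval sm z (monom 1 n) = z ^ n"
    using calg_scale_one[OF calg] calg_scale_zero_left[OF calg]
    by (simp add: poly_eval_def map_poly_monom poly_monom)
  ultimately show ?thesis using poly_eval_const calg_scale_minus_left[OF calg] by simp
qed

lemma prod_diff_unit_roots:
  "n \<ge> 1 \<Longrightarrow> (\<Prod>k<n. z - sm (\<mu> * unit_root n k) 1) = z ^ n - sm (\<mu> ^ n) 1"
  using poly_eval_prod_linear[of z "\<lambda>k. \<mu> * unit_root n k" n]
    poly_eval_monom_minus_const[of z n "\<mu> ^ n"]
    prod_linear_unit_roots[of n \<mu>]
  by simp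

end

locale mult_seminorm =
  fixes sm :: "complex \<Rightarrow> 'a::comm_ring_1 \<Rightarrow> 'a" and m :: "'a \<Rightarrow> real"
  assumes calg: "calg sm" and seminorm: "seminorm sm m" and one: "m 1 = 1"
    and mult: "\<And>a y. m (a * y) = m a * m y"
begin

lemma scale_one: "m (sm a 1) = cmod a"
  using seminorm_scale[OF seminorm, of a 1] one by simp

lemma power: "m (w ^ n) = m w ^ n"
  by (induction n) (simp_all add: one mult)

lemma prod: "m (\<Prod>k<(n::nat). f k) = (\<Prod>k<n. m (f k))"
  by (induction n) (simp_all add: one mult)

definition scalar_dist :: "'a \<Rightarrow> complex \<Rightarrow> real" where
  "scalar_dist y a = m (y - sm a 1)"

lemma scalar_dist_nonneg: "0 \<le> scalar_dist y a"
  unfolding scalar_dist_def by (rule seminorm_nonneg[OF seminorm])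

lemma scalar_dist_lipschitz: "\<bar>scalar_dist y a - scalar_dist y b\<bar> \<le> cmod (a - b)"
proof -
  have "(y - sm a 1) - (y - sm b 1) = sm (b - a) 1"
    using calg_scale_diff_left[OF calg, of b a 1] by simp
  then show ?thesis
    unfolding scalar_dist_def using seminorm_reverse_triangle[OF seminorm calg] scale_one
    by (metis norm_minus_commute)
qed

lemma continuous_on_scalar_dist: "continuous_on UNIV (scalar_dist y)"
  unfolding continuous_on_iff
proof (intro ballI allI impI)
  fix a and e :: real assume "e > 0"
  then show "\<exists>d>0. \<forall>b\<in>UNIV. dist b a < d \<longrightarrow> dist (scalar_dist y b) (scalar_dist y a) < e"
    using scalar_dist_lipschitz
    by (intro exI[of _ e]) (auto simp: dist_norm dist_real_def intro: le_less_trans)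
qed

lemma scalar_dist_ge: "cmod a - m y \<le> scalar_dist y a"
proof -
  have "m (sm a 1) \<le> m y + m (y - sm a 1)"
    using seminorm_diff_le[OF seminorm calg, of y "y - sm a 1"] by simp
  then show ?thesis using scale_one by (simp add: scalar_dist_def)
qed

lemma scalar_dist_attains_min: "\<exists>l. \<forall>b. scalar_dist y l \<le> scalar_dist y b"
proof -
  define r where "r = 2 * m y + 1"
  have "0 \<in> cball (0::complex) r" using seminorm_nonneg[OF seminorm, of y] by (simp add: r_def)
  then obtain l where l: "\<forall>b\<in>cball 0 r. scalar_dist y l \<le> scalar_dist y b"
    using continuous_attains_inf[OF compact_cball _ continuous_on_subset[OF continuous_on_scalar_dist]]
    by blast
  have "scalar_dist y l \<le> scalar_dist y b" for b
  proof (cases "b \<in> cball 0 r")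
    case False
    then have "scalar_dist y b > m y" using scalar_dist_ge[of b y] by (simp add: r_def)
    moreover have "scalar_dist y l \<le> scalar_dist y 0" using l \<open>0 \<in> cball 0 r\<close> by blast
    moreover have "scalar_dist y 0 = m y"
      by (simp add: scalar_dist_def calg_scale_zero_left[OF calg])
    ultimately show ?thesis by linarith
  qed (use l in blast)
  then show ?thesis by blast
qed

text \<open>If \<open>z = y - l\<close> has minimal distance \<open>M\<close> from the scalars, then
  \<open>\<Prod>\<^sub>k (z - \<mu> \<omega>\<^sup>k) = z\<^sup>N - \<mu>\<^sup>N\<close> has seminorm at most \<open>M\<^sup>N + |\<mu>|\<^sup>N\<close>, while all factors have seminorm
  at least \<open>M\<close>; for \<open>|\<mu>| < M\<close> and \<open>N \<rightarrow> \<infinity>\<close> this forces the factor \<open>z - \<mu>\<close> to have seminorm \<open>M\<close>.\<close>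

lemma scalar_dist_min_shift:
  assumes min: "\<And>b. M \<le> scalar_dist y b" and M: "M > 0"
    and l: "scalar_dist y l = M" and \<mu>: "cmod \<mu> < M"
  shows "scalar_dist y (l + \<mu>) = M"
proof (rule ccontr)
  assume "scalar_dist y (l + \<mu>) \<noteq> M"
  then have gt: "scalar_dist y (l + \<mu>) > M" using min[of "l + \<mu>"] by simp
  define \<rho> where "\<rho> = cmod \<mu> / M"
  have \<rho>: "0 \<le> \<rho>" "\<rho> < 1" using \<mu> M by (auto simp: \<rho>_def)
  define \<delta> where "\<delta> = (scalar_dist y (l + \<mu>) - M) / M"
  have \<delta>: "\<delta> > 0" using gt M by (simp add: \<delta>_def)
  obtain n where n: "\<rho> ^ n < \<delta>" using real_arch_pow_inv[OF \<delta> \<rho>(2)] by blast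
  define N where "N = Suc n"
  have "\<rho> ^ N \<le> \<rho> ^ n" using \<rho> by (simp add: N_def mult_left_le_one_le)
  then have \<rho>N: "\<rho> ^ N < \<delta>" using n by simp
  define z where "z = y - sm l 1"
  have factor: "z - sm (\<mu> * unit_root N k) 1 = y - sm (l + \<mu> * unit_root N k) 1" for k
    using calg_scale_add_left[OF calg, of l "\<mu> * unit_root N k" 1] by (simp add: z_def)
  have "M ^ n \<le> (\<Prod>k<n. scalar_dist y (l + \<mu> * unit_root N (Suc k)))"
    using prod_mono[of "{..<n}" "\<lambda>_. M"] min M by simp
  then have "scalar_dist y (l + \<mu>) * M ^ n
      \<le> scalar_dist y (l + \<mu>) * (\<Prod>k<n. scalar_dist y (l + \<mu> * unit_root N (Suc k)))"
    using scalar_dist_nonneg by (rule mult_left_mono)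
  also have "\<dots> = (\<Prod>k<N. scalar_dist y (l + \<mu> * unit_root N k))"
    unfolding N_def by (subst prod.lessThan_Suc_shift) simp
  also have "\<dots> = m (\<Prod>k<N. z - sm (\<mu> * unit_root N k) 1)"
    by (simp add: prod factor scalar_dist_def)
  also have "\<dots> = m (z ^ N - sm (\<mu> ^ N) 1)"
    using prod_diff_unit_roots[OF calg, of N z \<mu>] by (simp add: N_def)
  also have "\<dots> \<le> M ^ N + cmod \<mu> ^ N"
    using seminorm_diff_le[OF seminorm calg, of "z ^ N" "sm (\<mu> ^ N) 1"] l
    by (simp add: power scale_one norm_power scalar_dist_def z_def)
  also have "\<dots> = M ^ n * (M + M * \<rho> ^ N)"
    using M by (simp add: \<rho>_def N_def power_divide field_simps)
  finally have "scalar_dist y (l + \<mu>) \<le> M + M * \<rho> ^ N" using M by simp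
  also have "\<dots> < M + M * \<delta>" using \<rho>N M by simp
  also have "\<dots> = scalar_dist y (l + \<mu>)" using M by (simp add: \<delta>_def)
  finally show False by simp
qed

text \<open>By the shift lemma the minimum would be attained along an unbounded ray, contradicting
  \<open>scalar_dist_ge\<close>; so every element is at distance zero from a scalar.\<close>

lemma scalar_dist_zero: "\<exists>l. scalar_dist y l = 0"
proof -
  obtain l0 where min: "\<And>b. scalar_dist y l0 \<le> scalar_dist y b"
    using scalar_dist_attains_min by blast
  define M where "M = scalar_dist y l0"
  have "M = 0"
  proof (rule ccontr)
    assume "M \<noteq> 0"
    then have M: "M > 0" using scalar_dist_nonneg[of y l0] by (simp add: M_def)
    define step where "step = complex_of_real (M / 2)"
    have ray: "scalar_dist y (l0 + of_nat k * step) = M" for k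
    proof (induction k)
      case (Suc k)
      have "scalar_dist y ((l0 + of_nat k * step) + step) = M"
        using M min by (intro scalar_dist_min_shift[OF _ M Suc]) (auto simp: M_def step_def)
      then show ?case by (simp add: algebra_simps)
    qed (simp add: M_def)
    obtain k where k: "cmod l0 + m y + M < of_nat k * (M / 2)"
      using ex_less_of_nat_mult[of "M / 2" "cmod l0 + m y + M"] M by auto
    have "of_nat k * (M / 2) - cmod l0 \<le> cmod (l0 + of_nat k * step)"
      using norm_diff_ineq[of "of_nat k * step" l0] M by (simp add: step_def norm_mult add.commute)
    then have "scalar_dist y (l0 + of_nat k * step) > M"
      using scalar_dist_ge[of "l0 + of_nat k * step" y] k by simp
    then show False using ray[of k] by simp
  qed
  then show ?thesis unfolding M_def by blast
qed

definition character :: "'a \<Rightarrow> complex" where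
  "character y = (SOME l. scalar_dist y l = 0)"

lemma scalar_dist_character: "scalar_dist y (character y) = 0"
  unfolding character_def using scalar_dist_zero by (rule someI_ex)

lemma character_eqI:
  assumes "m (y - sm a 1) = 0"
  shows "character y = a"
proof -
  have "sm (a - character y) 1 = (y - sm (character y) 1) - (y - sm a 1)"
    using calg_scale_diff_left[OF calg] by simp
  then have "cmod (a - character y) \<le> m (y - sm (character y) 1) + m (y - sm a 1)"
    using seminorm_diff_le[OF seminorm calg] scale_one by metis
  then show ?thesis using assms scalar_dist_character by (simp add: scalar_dist_def)
qed

lemma character_Mstar: "character \<in> Mstar sm"
proof -
  note dist0 = scalar_dist_character[unfolded scalar_dist_def]
  have zero_if_le: "m z \<le> 0 \<Longrightarrow> m z = 0" for z
    using seminorm_nonneg[OF seminorm, of z] by simp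
  have "character (x + y) = character x + character y" for x y
  proof (rule character_eqI, rule zero_if_le)
    have eq: "(x + y) - sm (character x + character y) 1
        = (x - sm (character x) 1) + (y - sm (character y) 1)"
      using calg_scale_add_left[OF calg] by simp
    show "m ((x + y) - sm (character x + character y) 1) \<le> 0"
      unfolding eq
      using seminorm_triangle[OF seminorm, of "x - sm (character x) 1" "y - sm (character y) 1"] dist0
      by simp
  qed
  moreover have "character (sm a x) = a * character x" for a x
  proof (rule character_eqI)
    have "sm a x - sm (a * character x) 1 = sm a (x - sm (character x) 1)"
      using calg_scale_diff_right[OF calg] calg_scale_scale[OF calg] by simp
    then show "m (sm a x - sm (a * character x) 1) = 0"
      using seminorm_scale[OF seminorm] dist0 by simp
  qed
  moreover have "character (x * y) = character x * character y" for x y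
  proof (rule character_eqI, rule zero_if_le)
    have eq: "x * y - sm (character x * character y) 1
        = (x - sm (character x) 1) * y + sm (character x) 1 * (y - sm (character y) 1)"
      using calg_scale_mult_one[OF calg] by (simp add: algebra_simps)
    show "m (x * y - sm (character x * character y) 1) \<le> 0"
      unfolding eq using seminorm_triangle[OF seminorm, of "(x - sm (character x) 1) * y"
          "sm (character x) 1 * (y - sm (character y) 1)"] dist0 mult
      by simp
  qed
  moreover have "character 1 = 1"
    by (rule character_eqI) (simp add: calg_scale_one[OF calg] seminorm_zero[OF seminorm calg])
  ultimately show ?thesis unfolding Mstar_def by (auto intro: exI[of _ 1])
qed

lemma norm_character: "cmod (character y) = m y"
  using seminorm_reverse_triangle[OF seminorm calg, of y "sm (character y) 1"] scalar_dist_character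
  by (simp add: scalar_dist_def scale_one)

end

theorem uniform_seminorm_attained_by_character:
  assumes calg: "calg sm" and u: "uniform_seminorm sm p" and px: "p x > 0"
  shows "\<exists>g\<in>Mstar sm. (\<forall>y. cmod (g y) \<le> p y) \<and> cmod (g x) = p x"
proof -
  obtain m where sn: "seminorm sm m" and le_p: "\<forall>y. m y \<le> p y" and mx: "m x = p x"
    and mult: "\<forall>a y. m (a * y) = m a * m y"
    using multiplicative_seminorm_below_uniform_seminorm[OF calg u px] by blast
  have "m 1 = 1" using mult[rule_format, of x 1] mx px by simp
  then interpret mult_seminorm sm m using calg sn mult by unfold_locales auto
  show ?thesis using character_Mstar norm_character le_p mx by (intro bexI[of _ character]) auto
qed

section \<open>Topologies determined by seminorms\<close>

definition seminorm_sum :: "('a \<Rightarrow> real) set \<Rightarrow> 'a \<Rightarrow> real" where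
  "seminorm_sum F y = (\<Sum>p\<in>F. p y)"

lemma seminorm_seminorm_sum:
  assumes "finite F" "\<forall>p\<in>F. seminorm sm p"
  shows "seminorm sm (seminorm_sum F)"
  unfolding seminorm_def seminorm_sum_def
proof (intro conjI allI)
  fix x y c
  show "0 \<le> (\<Sum>p\<in>F. p x)" using assms seminorm_nonneg by (intro sum_nonneg) blast
  show "(\<Sum>p\<in>F. p (x + y)) \<le> (\<Sum>p\<in>F. p x) + (\<Sum>p\<in>F. p y)"
    using assms seminorm_triangle by (simp flip: sum.distrib) (intro sum_mono, blast)
  have "\<forall>p\<in>F. p (sm c x) = cmod c * p x" using assms seminorm_scale by blast
  then show "(\<Sum>p\<in>F. p (sm c x)) = cmod c * (\<Sum>p\<in>F. p x)"
    by (simp add: sum_distrib_left)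
qed

lemma seminorm_sum_ge:
  assumes "finite F" "\<forall>p\<in>F. seminorm sm p" "p \<in> F"
  shows "p y \<le> seminorm_sum F y"
  unfolding seminorm_sum_def using assms seminorm_nonneg by (intro member_le_sum) auto

lemma seminorm_sum_less:
  assumes "finite G" "\<And>p. p \<in> G \<Longrightarrow> p z \<le> t" "t * (real (card G) + 1) < \<epsilon>" "0 < \<epsilon>"
  shows "seminorm_sum G z < \<epsilon>"
proof -
  have "seminorm_sum G z \<le> real (card G) * t"
    unfolding seminorm_sum_def using sum_mono[of G "\<lambda>p. p z" "\<lambda>_. t"] assms(2) by simp
  moreover have "real (card G) * t < \<epsilon>"
  proof (cases "t \<ge> 0")
    case True
    then have "real (card G) * t \<le> t * (real (card G) + 1)" by (simp add: algebra_simps)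
    then show ?thesis using assms(3) by linarith
  next
    case False
    then have "real (card G) * t \<le> 0" by (simp add: mult_nonneg_nonpos)
    then show ?thesis using assms(4) by linarith
  qed
  ultimately show ?thesis by linarith
qed

context
  fixes sm :: "complex \<Rightarrow> 'a::comm_ring_1 \<Rightarrow> 'a" and T :: "'a topology" and P :: "('a \<Rightarrow> real) set"
  assumes determined: "determined_by T P" and seminorms: "\<forall>p\<in>P. seminorm sm p"
begin

lemma openin_seminorm_sum_ball:
  assumes calg: "calg sm" and F: "finite F" "F \<subseteq> P"
  shows "openin T {y. seminorm_sum F (y - x) < r}"
  unfolding determined[unfolded determined_by_def, rule_format]
proof (intro ballI)
  fix y0 assume "y0 \<in> {y. seminorm_sum F (y - x) < r}"
  then have s: "r - seminorm_sum F (y0 - x) > 0" by simp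
  have sn: "seminorm sm (seminorm_sum F)" using seminorms F by (intro seminorm_seminorm_sum) auto
  define e where "e = (r - seminorm_sum F (y0 - x)) / (real (card F) + 1)"
  have e: "e > 0" and ce: "real (card F) * e < r - seminorm_sum F (y0 - x)"
    using s by (simp_all add: e_def field_simps)
  have "{y. \<forall>p\<in>F. p (y - y0) < e} \<subseteq> {y. seminorm_sum F (y - x) < r}"
  proof
    fix y assume "y \<in> {y. \<forall>p\<in>F. p (y - y0) < e}"
    then have "seminorm_sum F (y - y0) \<le> (\<Sum>p\<in>F. e)"
      unfolding seminorm_sum_def by (intro sum_mono) (simp add: less_imp_le)
    then show "y \<in> {y. seminorm_sum F (y - x) < r}"
      using ce seminorm_diff_triangle[OF sn calg, of y x y0] by simp
  qed
  then show "\<exists>F' e. finite F' \<and> F' \<subseteq> P \<and> e > 0 \<and> {y. \<forall>p\<in>F'. p (y - y0) < e}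
      \<subseteq> {y. seminorm_sum F (y - x) < r}"
    using F e by (intro exI[of _ F] exI[of _ e]) simp
qed

lemma seminorm_sum_ball_subset_openin:
  assumes "openin T U" "x \<in> U"
  obtains F e where "finite F" "F \<subseteq> P" "e > 0" "{y. seminorm_sum F (y - x) < e} \<subseteq> U"
proof -
  have "\<forall>x\<in>U. \<exists>F e. finite F \<and> F \<subseteq> P \<and> e > 0 \<and> {y. \<forall>p\<in>F. p (y - x) < e} \<subseteq> U"
    using determined[unfolded determined_by_def, rule_format, of U] assms(1) by (rule iffD1)
  from bspec[OF this assms(2)] obtain F e
    where F: "finite F" "F \<subseteq> P" "e > 0" and ball: "{y. \<forall>p\<in>F. p (y - x) < e} \<subseteq> U"
    by (elim exE conjE)
  have "{y. seminorm_sum F (y - x) < e} \<subseteq> {y. \<forall>p\<in>F. p (y - x) < e}"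
  proof (intro subsetI CollectI ballI)
    fix y p assume "y \<in> {y. seminorm_sum F (y - x) < e}" "p \<in> F"
    moreover have "\<forall>p\<in>F. seminorm sm p" using seminorms F(2) by blast
    ultimately show "p (y - x) < e" using seminorm_sum_ge[OF F(1), of sm p "y - x"] by simp
  qed
  then show ?thesis using that F ball by blast
qed

lemma determined_by_separates_points:
  assumes T: "Hausdorff_space T" "topspace T = UNIV" and calg: "calg sm" and x: "x \<noteq> 0"
  shows "\<exists>p\<in>P. p x > 0"
proof (rule ccontr)
  assume none: "\<not> ?thesis"
  have zero: "\<forall>p\<in>P. p x = 0"
  proof
    fix p assume p: "p \<in> P"
    then have "0 \<le> p x" using seminorms seminorm_nonneg by blast
    then show "p x = 0" using none p by force
  qed
  have "\<exists>U V. openin T U \<and> openin T V \<and> x \<in> U \<and> 0 \<in> V \<and> disjnt U V"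
    using T(1)[unfolded Hausdorff_space_def, rule_format, of x 0] x T(2) by simp
  then obtain U V where UV: "openin T U" "openin T V" "x \<in> U" "0 \<in> V" "disjnt U V"
    by (elim exE conjE)
  obtain F e where F: "finite F" "F \<subseteq> P" "e > 0" "{y. seminorm_sum F (y - 0) < e} \<subseteq> V"
    by (rule seminorm_sum_ball_subset_openin[OF UV(2,4)])
  have "seminorm_sum F x = 0" unfolding seminorm_sum_def using zero F(2) by (intro sum.neutral) auto
  then have "x \<in> V" using F by auto
  then show False using UV by (auto simp: disjnt_def)
qed

end

text \<open>Otherwise \<open>y / h y\<close> would lie in the ball and take the value 1.\<close>

lemma bound_if_ball_avoids_one:
  assumes Q: "seminorm sm Q" and \<delta>: "\<delta> > 0"
    and scale_S: "\<And>a y. y \<in> S \<Longrightarrow> sm a y \<in> S"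
    and h_scale: "\<And>a y. y \<in> S \<Longrightarrow> h (sm a y) = a * h y"
    and avoids: "\<And>y. y \<in> S \<Longrightarrow> Q y < \<delta> \<Longrightarrow> h y \<noteq> 1"
    and y: "y \<in> S"
  shows "cmod (h y) \<le> Q y / \<delta>"
proof (rule ccontr)
  assume "\<not> ?thesis"
  then have gt: "cmod (h y) > Q y / \<delta>" by simp
  then have hy: "h y \<noteq> 0" using seminorm_nonneg[OF Q, of y] \<delta> by (auto simp: field_simps)
  have "Q (sm (1 / h y) y) = Q y / cmod (h y)" using seminorm_scale[OF Q] by (simp add: norm_divide)
  also have "\<dots> < \<delta>" using gt hy \<delta> by (simp add: field_simps)
  finally have "h (sm (1 / h y) y) \<noteq> 1" using avoids scale_S[OF y] by blast
  then show False using h_scale[OF y] hy by simp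
qed

lemma continuous_map_closure_of_eq_0:
  fixes g :: "'a \<Rightarrow> 'b::real_normed_vector"
  assumes g: "continuous_map (subtopology X (X closure_of S)) euclidean g"
    and S: "S \<subseteq> topspace X" and zero: "\<forall>x\<in>S. g x = 0" and c: "c \<in> X closure_of S"
  shows "g c = 0"
proof (rule ccontr)
  assume gc: "g c \<noteq> 0"
  have "openin (subtopology X (X closure_of S)) {x \<in> topspace (subtopology X (X closure_of S)). g x \<in> - {0}}"
    by (rule openin_continuous_map_preimage[OF g]) (simp add: open_Compl)
  then obtain U where U: "openin X U"
    and eq: "{x \<in> topspace (subtopology X (X closure_of S)). g x \<in> - {0}} = U \<inter> (X closure_of S)"
    unfolding openin_subtopology by blast
  have "c \<in> U" using eq c gc closure_of_subset_topspace[of X S] by auto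
  then obtain y where y: "y \<in> S" "y \<in> U" using c U unfolding in_closure_of by blast
  then have "g y \<noteq> 0" using eq closure_of_subset[OF S] closure_of_subset_topspace[of X S] by auto
  then show False using zero y by blast
qed

lemma closure_of_closed_binop:
  assumes g: "continuous_map (prod_topology X X) X g"
    and closed: "\<And>x y. x \<in> S \<Longrightarrow> y \<in> S \<Longrightarrow> g (x, y) \<in> S"
    and x: "x \<in> X closure_of S" and y: "y \<in> X closure_of S"
  shows "g (x, y) \<in> X closure_of S"
proof -
  have "g ` (prod_topology X X closure_of (S \<times> S)) \<subseteq> X closure_of (g ` (S \<times> S))"
    by (rule continuous_map_image_closure_subset[OF g])
  also have "\<dots> \<subseteq> X closure_of S" using closed by (intro closure_of_mono) auto
  finally show ?thesis using x y by (auto simp: closure_of_Times)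
qed

lemma closure_of_closed_unop:
  assumes g: "continuous_map X X g" and closed: "\<And>x. x \<in> S \<Longrightarrow> g x \<in> S"
    and x: "x \<in> X closure_of S"
  shows "g x \<in> X closure_of S"
proof -
  have "g ` (X closure_of S) \<subseteq> X closure_of (g ` S)"
    by (rule continuous_map_image_closure_subset[OF g])
  also have "\<dots> \<subseteq> X closure_of S" using closed by (intro closure_of_mono) auto
  finally show ?thesis using x by auto
qed

lemma top_alg_continuous_map_scale:
  assumes "top_alg sm T"
  shows "continuous_map T T (sm a)"
proof -
  have "continuous_map T (prod_topology euclidean T) (\<lambda>x. (a, x))"
    by (intro continuous_map_pairedI) (auto simp: continuous_map_id[unfolded id_def])
  moreover have "continuous_map (prod_topology euclidean T) T (\<lambda>(c, x). sm c x)"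
    using assms by (simp add: top_alg_def)
  ultimately have "continuous_map T T ((\<lambda>(c, x). sm c x) \<circ> (\<lambda>x. (a, x)))"
    by (rule continuous_map_compose)
  then show ?thesis by (simp add: o_def)
qed

lemma continuous_map_complex_mult:
  fixes f g :: "'a \<Rightarrow> complex"
  shows "continuous_map X euclidean f \<Longrightarrow> continuous_map X euclidean g
    \<Longrightarrow> continuous_map X euclidean (\<lambda>x. f x * g x)"
  by (simp add: continuous_map_atin tendsto_mult)

context
  fixes sm :: "complex \<Rightarrow> 'a::comm_ring_1 \<Rightarrow> 'a" and T :: "'a topology" and P :: "('a \<Rightarrow> real) set"
    and F :: "('a \<Rightarrow> real) set"
  assumes calg: "calg sm" and topspace: "topspace T = UNIV"
    and determined: "determined_by T P" and seminorms: "\<forall>p\<in>P. seminorm sm p"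
    and F: "finite F" "F \<subseteq> P"
begin

private lemma seminorm_F: "seminorm sm (seminorm_sum F)"
  using seminorms F by (intro seminorm_seminorm_sum) auto

lemma closure_of_seminorm_sum_approx:
  assumes "c \<in> T closure_of S" "r > 0"
  shows "\<exists>b\<in>S. seminorm_sum F (b - c) < r"
proof -
  define U where "U = {y. seminorm_sum F (y - c) < r}"
  have "openin T U"
    unfolding U_def by (rule openin_seminorm_sum_ball[OF determined seminorms calg F])
  moreover have "c \<in> U"
    using assms(2) seminorm_zero[OF seminorm_F calg] by (simp add: U_def)
  moreover have "\<forall>U. c \<in> U \<and> openin T U \<longrightarrow> (\<exists>y. y \<in> S \<and> y \<in> U)"
    using assms(1) unfolding in_closure_of by (elim conjE)
  ultimately have "\<exists>y. y \<in> S \<and> y \<in> U" by blast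
  then show ?thesis by (auto simp: U_def)
qed

lemma continuous_map_if_seminorm_sum_lipschitz:
  assumes K: "K > 0"
    and lip: "\<And>c c'. c \<in> C \<Longrightarrow> c' \<in> C \<Longrightarrow> cmod (f c - f c') \<le> K * seminorm_sum F (c - c')"
  shows "continuous_map (subtopology T C) euclidean f"
  unfolding continuous_map_def
proof (intro conjI allI impI)
  show "f \<in> topspace (subtopology T C) \<rightarrow> topspace euclidean" by simp
  fix U :: "complex set" assume "openin euclidean U"
  then have U: "open U" by simp
  show "openin (subtopology T C) {x \<in> topspace (subtopology T C). f x \<in> U}"
  proof (subst openin_subopen, intro ballI)
    fix c assume "c \<in> {x \<in> topspace (subtopology T C). f x \<in> U}"
    then have c: "c \<in> C" "f c \<in> U" by (auto simp: topspace)
    obtain r where r: "r > 0" "ball (f c) r \<subseteq> U" using U c(2) open_contains_ball by blast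
    define V where "V = C \<inter> {y. seminorm_sum F (y - c) < r / K}"
    have "openin (subtopology T C) V"
      unfolding V_def
      by (rule openin_subtopology_Int2[OF openin_seminorm_sum_ball[OF determined seminorms calg F]])
    moreover have "c \<in> V" using c r K seminorm_zero[OF seminorm_F calg] by (simp add: V_def)
    moreover have "V \<subseteq> {x \<in> topspace (subtopology T C). f x \<in> U}"
    proof
      fix y assume "y \<in> V"
      then have y: "y \<in> C" "seminorm_sum F (y - c) < r / K" by (auto simp: V_def)
      have "dist (f c) (f y) \<le> K * seminorm_sum F (c - y)"
        using lip[OF c(1) y(1)] by (simp add: dist_norm)
      also have "\<dots> < r"
        using y(2) seminorm_diff_commute[OF seminorm_F calg, of c y] K by (simp add: field_simps)
      finally show "y \<in> {x \<in> topspace (subtopology T C). f x \<in> U}"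
        using r y(1) by (auto simp: topspace)
    qed
    ultimately show "\<exists>V. openin (subtopology T C) V \<and> c \<in> V \<and> V
        \<subseteq> {x \<in> topspace (subtopology T C). f x \<in> U}"
      by blast
  qed
qed

text \<open>Points of \<open>S\<close> are approximated by constant sequences, so that the extension below agrees
  with the given functional on \<open>S\<close> by construction.\<close>

lemma closure_of_seminorm_sum_sequence:
  obtains b where "\<And>c n. c \<in> T closure_of S \<Longrightarrow> b c n \<in> S
      \<and> seminorm_sum F (b c n - c) < inverse (real (Suc n))"
    and "\<And>c n. c \<in> S \<Longrightarrow> b c n = c"
proof -
  have "\<forall>c\<in>T closure_of S. \<exists>b. \<forall>n. b n \<in> S \<and> seminorm_sum F (b n - c) < inverse (real (Suc n))"
  proof
    fix c assume c: "c \<in> T closure_of S"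
    have "\<forall>n. \<exists>x. x \<in> S \<and> seminorm_sum F (x - c) < inverse (real (Suc n))"
      using closure_of_seminorm_sum_approx[OF c]
      by (meson inverse_positive_iff_positive of_nat_0_less_iff zero_less_Suc)
    then show "\<exists>b. \<forall>n. b n \<in> S \<and> seminorm_sum F (b n - c) < inverse (real (Suc n))" by (rule choice)
  qed
  from bchoice[OF this] obtain b
    where b: "\<forall>c\<in>T closure_of S. \<forall>n. b c n \<in> S \<and> seminorm_sum F (b c n - c) < inverse (real (Suc n))"
    by (elim exE)
  show ?thesis
  proof (rule that[of "\<lambda>c n. if c \<in> S then c else b c n"])
    show "(if c \<in> S then c else b c n) \<in> S \<and>
        seminorm_sum F ((if c \<in> S then c else b c n) - c) < inverse (real (Suc n))"
      if "c \<in> T closure_of S" for c n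
      using b that seminorm_zero[OF seminorm_F calg] by auto
  qed simp
qed

context
  fixes S :: "'a set" and h :: "'a \<Rightarrow> complex" and K :: real
  assumes K: "K > 0"
    and lip: "\<And>x y. x \<in> S \<Longrightarrow> y \<in> S \<Longrightarrow> cmod (h x - h y) \<le> K * seminorm_sum F (x - y)"
begin

private lemma lipschitz_approx:
  assumes "x \<in> S" "y \<in> S" "seminorm_sum F (x - c) < r" "seminorm_sum F (y - c') < r'"
  shows "cmod (h x - h y) \<le> K * (seminorm_sum F (c - c') + r + r')"
proof -
  have "seminorm_sum F (x - y)
      \<le> seminorm_sum F (x - c) + seminorm_sum F (c - c') + seminorm_sum F (c' - y)"
    using seminorm_diff_triangle[OF seminorm_F calg, of x y c]
      seminorm_diff_triangle[OF seminorm_F calg, of c y c']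
    by simp
  also have "\<dots> \<le> seminorm_sum F (c - c') + r + r'"
    using assms(3,4) seminorm_diff_commute[OF seminorm_F calg, of c' y] by simp
  finally show ?thesis using lip[OF assms(1,2)] K by (meson mult_left_mono order_trans less_imp_le)
qed

lemma Cauchy_if_seminorm_sum_lipschitz:
  assumes b: "\<And>n. b n \<in> S \<and> seminorm_sum F (b n - c) < inverse (real (Suc n))"
  shows "Cauchy (\<lambda>n. h (b n))"
proof (rule metric_CauchyI)
  fix e :: real assume e: "e > 0"
  obtain M where M: "inverse (real (Suc M)) < e / (4 * K)"
    using reals_Archimedean[of "e / (4 * K)"] e K by auto
  have small: "seminorm_sum F (b n - c) < e / (4 * K)" if "M \<le> n" for n
  proof -
    have "inverse (real (Suc n)) \<le> inverse (real (Suc M))"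
      using that by (intro le_imp_inverse_le) auto
    then show ?thesis using b[of n] M by linarith
  qed
  have "dist (h (b m)) (h (b n)) < e" if "M \<le> m" "M \<le> n" for m n
  proof -
    have "dist (h (b m)) (h (b n)) \<le> K * (seminorm_sum F (c - c) + e / (4 * K) + e / (4 * K))"
      unfolding dist_norm using b small that by (intro lipschitz_approx) auto
    also have "\<dots> < e" using K e seminorm_zero[OF seminorm_F calg] by (simp add: field_simps)
    finally show ?thesis .
  qed
  then show "\<exists>M. \<forall>m\<ge>M. \<forall>n\<ge>M. dist (h (b m)) (h (b n)) < e" by blast
qed

lemma seminorm_sum_lipschitz_extension:
  obtains f where "\<And>x. x \<in> S \<Longrightarrow> f x = h x"
    and "continuous_map (subtopology T (T closure_of S)) euclidean f"
proof -
  define C where "C = T closure_of S"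
  obtain b where b: "\<And>c n. c \<in> C \<Longrightarrow> b c n \<in> S \<and> seminorm_sum F (b c n - c) < inverse (real (Suc n))"
    and b_S: "\<And>c n. c \<in> S \<Longrightarrow> b c n = c"
    using closure_of_seminorm_sum_sequence unfolding C_def by blast
  define f where "f c = lim (\<lambda>n. h (b c n))" for c
  have f_lim: "(\<lambda>n. h (b c n)) \<longlonglongrightarrow> f c" if "c \<in> C" for c
    using Cauchy_if_seminorm_sum_lipschitz[OF b[OF that]]
    unfolding f_def Cauchy_convergent_iff convergent_LIMSEQ_iff .
  have f_lip: "cmod (f c - f c') \<le> K * seminorm_sum F (c - c')" if c: "c \<in> C" "c' \<in> C" for c c'
  proof -
    have "(\<lambda>n. cmod (h (b c n) - h (b c' n))) \<longlonglongrightarrow> cmod (f c - f c')"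
      by (intro tendsto_norm tendsto_diff f_lim c)
    moreover have "(\<lambda>n. K * (seminorm_sum F (c - c') + inverse (real (Suc n)) + inverse (real (Suc n))))
        \<longlonglongrightarrow> K * (seminorm_sum F (c - c') + 0 + 0)"
      by (intro tendsto_intros LIMSEQ_inverse_real_of_nat)
    moreover have "\<forall>n\<ge>0. cmod (h (b c n) - h (b c' n))
        \<le> K * (seminorm_sum F (c - c') + inverse (real (Suc n)) + inverse (real (Suc n)))"
      using b[OF c(1)] b[OF c(2)] by (blast intro: lipschitz_approx)
    ultimately have "cmod (f c - f c') \<le> K * (seminorm_sum F (c - c') + 0 + 0)"
      by (blast intro: LIMSEQ_le)
    then show ?thesis by simp
  qed
  have "f x = h x" if "x \<in> S" for x
    using that by (simp add: f_def b_S)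
  moreover have "continuous_map (subtopology T C) euclidean f"
    by (rule continuous_map_if_seminorm_sum_lipschitz[OF K f_lip])
  ultimately show ?thesis using that unfolding C_def by blast
qed

end

end

section \<open>Extension of characters to the closure\<close>

lemma closure_of_unop_identity:
  fixes f \<psi> :: "'a \<Rightarrow> 'b::real_normed_vector"
  assumes g: "continuous_map X X g" and S: "S \<subseteq> topspace X"
    and closed: "\<And>x. x \<in> S \<Longrightarrow> g x \<in> S"
    and f: "continuous_map (subtopology X (X closure_of S)) euclidean f"
    and \<psi>: "continuous_map (subtopology X (X closure_of S)) euclidean \<psi>"
    and eq: "\<And>x. x \<in> S \<Longrightarrow> f (g x) = \<psi> x"
    and x: "x \<in> X closure_of S"
  shows "f (g x) = \<psi> x"
proof -
  have "continuous_map (subtopology X (X closure_of S)) (subtopology X (X closure_of S)) g"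
    using closure_of_closed_unop[OF g closed]
    by (intro continuous_map_into_subtopology continuous_map_from_subtopology[OF g]) auto
  from continuous_map_compose[OF this f]
  have "continuous_map (subtopology X (X closure_of S)) euclidean (\<lambda>x. f (g x) - \<psi> x)"
    by (intro continuous_map_diff \<psi>) (simp add: o_def)
  then have "f (g x) - \<psi> x = 0"
    by (rule continuous_map_closure_of_eq_0[OF _ S _ x]) (simp add: eq)
  then show ?thesis by simp
qed

lemma closure_of_binop_identity:
  fixes f :: "'a \<Rightarrow> 'b::real_normed_vector"
  assumes g: "continuous_map (prod_topology X X) X g" and S: "S \<subseteq> topspace X"
    and closed: "\<And>x y. x \<in> S \<Longrightarrow> y \<in> S \<Longrightarrow> g (x, y) \<in> S"
    and f: "continuous_map (subtopology X (X closure_of S)) euclidean f"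
    and \<psi>: "continuous_map (prod_topology (subtopology X (X closure_of S)) (subtopology X (X closure_of S)))
      euclidean \<psi>"
    and eq: "\<And>x y. x \<in> S \<Longrightarrow> y \<in> S \<Longrightarrow> f (g (x, y)) = \<psi> (x, y)"
    and x: "x \<in> X closure_of S" and y: "y \<in> X closure_of S"
  shows "f (g (x, y)) = \<psi> (x, y)"
proof -
  define C where "C = X closure_of S"
  have prod_C: "subtopology (prod_topology X X) (prod_topology X X closure_of (S \<times> S))
      = prod_topology (subtopology X C) (subtopology X C)"
    by (simp add: C_def closure_of_Times subtopology_Times)
  have "continuous_map (prod_topology (subtopology X C) (subtopology X C)) (subtopology X C) g"
    using closure_of_closed_binop[OF g closed] continuous_map_from_subtopology[OF g, of "C \<times> C"]
    by (intro continuous_map_into_subtopology) (auto simp: C_def subtopology_Times)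
  from continuous_map_compose[OF this f[folded C_def]]
  have "continuous_map (prod_topology (subtopology X C) (subtopology X C))
      euclidean (\<lambda>z. f (g z) - \<psi> z)"
    by (intro continuous_map_diff \<psi>[folded C_def]) (simp add: o_def)
  then have "(\<lambda>z. f (g z) - \<psi> z) (x, y) = 0"
  proof (rule continuous_map_closure_of_eq_0[of "prod_topology X X" "S \<times> S", unfolded prod_C])
    show "S \<times> S \<subseteq> topspace (prod_topology X X)" using S by auto
    show "\<forall>z\<in>S \<times> S. f (g z) - \<psi> z = 0" using eq by auto
    show "(x, y) \<in> prod_topology X X closure_of (S \<times> S)" using x y by (simp add: closure_of_Times)
  qed
  then show ?thesis by simp
qed

lemma character_extends_to_closure:
  fixes sm :: "complex \<Rightarrow> 'a::comm_ring_1 \<Rightarrow> 'a" and h :: "'a \<Rightarrow> complex"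
  assumes top: "top_alg sm T" and mult_cont: "continuous_map (prod_topology T T) T (\<lambda>(x, y). x * y)"
    and determined: "determined_by T P" and seminorms: "\<forall>p\<in>P. seminorm sm p"
    and S_add: "\<And>x y. x \<in> S \<Longrightarrow> y \<in> S \<Longrightarrow> x + y \<in> S"
    and S_mult: "\<And>x y. x \<in> S \<Longrightarrow> y \<in> S \<Longrightarrow> x * y \<in> S"
    and S_scale: "\<And>a x. x \<in> S \<Longrightarrow> sm a x \<in> S" and S_one: "1 \<in> S"
    and h_add: "\<And>x y. x \<in> S \<Longrightarrow> y \<in> S \<Longrightarrow> h (x + y) = h x + h y"
    and h_scale: "\<And>a x. x \<in> S \<Longrightarrow> h (sm a x) = a * h x"
    and h_mult: "\<And>x y. x \<in> S \<Longrightarrow> y \<in> S \<Longrightarrow> h (x * y) = h x * h y"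
    and h_one: "h 1 = 1"
    and F: "finite F" "F \<subseteq> P" and K: "K > 0"
    and bound: "\<And>x. x \<in> S \<Longrightarrow> cmod (h x) \<le> K * seminorm_sum F x"
  shows "\<exists>f\<in>M_sub sm T (T closure_of S). \<forall>x\<in>S. f x = h x"
proof -
  have calg: "calg sm" and topspace: "topspace T = UNIV"
    and add_cont: "continuous_map (prod_topology T T) T (\<lambda>(x, y). x + y)"
    using top by (simp_all add: top_alg_def)
  define C where "C = T closure_of S"
  have S_diff: "x - y \<in> S" and h_diff: "h (x - y) = h x - h y" if "x \<in> S" "y \<in> S" for x y
    using S_add[OF that(1) S_scale[OF that(2)]] h_add[OF that(1) S_scale[OF that(2)]]
      h_scale[OF that(2)] calg_scale_minus_one[OF calg]
    by (metis diff_conv_add_uminus mult_minus1)+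
  obtain f where f_S: "\<And>x. x \<in> S \<Longrightarrow> f x = h x" and f: "continuous_map (subtopology T C) euclidean f"
    using seminorm_sum_lipschitz_extension[OF calg topspace determined seminorms F K, of S h]
      bound S_diff h_diff
    unfolding C_def by (metis (no_types, lifting))
  have SX: "S \<subseteq> topspace T" by (simp add: topspace)
  have f_fst: "continuous_map (prod_topology (subtopology T C) (subtopology T C))
      euclidean (\<lambda>z. f (fst z))"
    and f_snd: "continuous_map (prod_topology (subtopology T C) (subtopology T C))
        euclidean (\<lambda>z. f (snd z))"
    using continuous_map_compose[OF continuous_map_fst f]
      continuous_map_compose[OF continuous_map_snd f]
    by (simp_all add: o_def)
  have "f (x + y) = f x + f y" if "x \<in> C" "y \<in> C" for x y
    using closure_of_binop_identity[where \<psi>="\<lambda>z. f (fst z) + f (snd z)",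
        OF add_cont SX _ f[unfolded C_def]]
      continuous_map_add[OF f_fst f_snd] that S_add h_add f_S
    unfolding C_def by simp
  moreover have "f (x * y) = f x * f y" if "x \<in> C" "y \<in> C" for x y
    using closure_of_binop_identity[where \<psi>="\<lambda>z. f (fst z) * f (snd z)",
        OF mult_cont SX _ f[unfolded C_def]]
      continuous_map_complex_mult[OF f_fst f_snd] that S_mult h_mult f_S
    unfolding C_def by simp
  moreover have "f (sm a x) = a * f x" if "x \<in> C" for a x
    using closure_of_unop_identity[where \<psi>="\<lambda>x. a * f x",
        OF top_alg_continuous_map_scale[OF top] SX _ f[unfolded C_def]]
      continuous_map_complex_mult[OF continuous_map_const[THEN iffD2] f] that S_scale h_scale f_S
    unfolding C_def by simp
  moreover have "1 \<in> C" "f 1 = 1"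
    using closure_of_subset[OF SX] S_one f_S h_one by (auto simp: C_def)
  ultimately have "f \<in> M_sub sm T C"
    unfolding M_sub_def using f by force
  then show ?thesis using f_S unfolding C_def by blast
qed

section \<open>Characters of the algebra and of the closure of the range\<close>

lemma Mstar_one: "g \<in> Mstar sm \<Longrightarrow> g 1 = 1"
proof -
  assume "g \<in> Mstar sm"
  then obtain x where "g x \<noteq> 0" "g (x * 1) = g x * g 1" unfolding Mstar_def by blast
  then show ?thesis by simp
qed

lemma M_sub_one: "f \<in> M_sub sm T C \<Longrightarrow> 1 \<in> C \<Longrightarrow> f 1 = 1"
proof -
  assume f: "f \<in> M_sub sm T C" and "1 \<in> C"
  then obtain x where "x \<in> C" "f x \<noteq> 0" "f (x * 1) = f x * f 1" unfolding M_sub_def by blast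
  then show ?thesis by simp
qed

text \<open>Banach--Alaoglu for characters: a pointwise bounded set of characters is weak* compact, being
  closed in a product of discs.\<close>

lemma compactin_weak_star_bounded:
  fixes sm :: "complex \<Rightarrow> 'a::comm_ring_1 \<Rightarrow> 'a" and bound :: "'a \<Rightarrow> real"
  shows "compactin (weak_star sm) {g \<in> Mstar sm. \<forall>x. cmod (g x) \<le> bound x}"
proof -
  define X :: "('a \<Rightarrow> complex) topology" where "X = product_topology (\<lambda>_. euclidean) UNIV"
  define K where "K = {g \<in> Mstar sm. \<forall>x. cmod (g x) \<le> bound x}"
  have X: "topspace X = UNIV" by (simp add: X_def)
  have proj: "continuous_map X euclidean (\<lambda>g. g x)" for x
    using continuous_map_product_projection[of x UNIV "\<lambda>_. euclidean"] by (simp add: X_def)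
  have K_eq: "K = (\<Inter>x. \<Inter>y. {g \<in> topspace X. g (x + y) = g x + g y})
      \<inter> (\<Inter>c. \<Inter>x. {g \<in> topspace X. g (sm c x) = c * g x})
      \<inter> (\<Inter>x. \<Inter>y. {g \<in> topspace X. g (x * y) = g x * g y})
      \<inter> {g \<in> topspace X. g 1 = 1}
      \<inter> (\<Inter>x. {g \<in> topspace X. cmod (g x) \<in> {..bound x}})" (is "_ = ?rhs")
  proof (intro equalityI subsetI)
    fix g assume "g \<in> K"
    then show "g \<in> ?rhs" using Mstar_one[of g sm] by (simp add: K_def Mstar_def X)
  next
    fix g assume "g \<in> ?rhs"
    then show "g \<in> K" unfolding K_def Mstar_def X by (simp add: exI[of _ 1])
  qed
  have closed_eq: "closedin X {g \<in> topspace X. \<phi> g = \<psi> g}"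
    if "continuous_map X euclidean \<phi>" "continuous_map X euclidean \<psi>"
      for \<phi> \<psi> :: "('a \<Rightarrow> complex) \<Rightarrow> complex"
    using closedin_continuous_maps_eq[OF Hausdorff_space_euclidean that] .
  have closed_le: "closedin X {g \<in> topspace X. cmod (g x) \<in> {..bound x}}" for x
    by (rule closedin_continuous_map_preimage[where Y=euclidean])
      (simp_all add: continuous_map_norm proj)
  have "closedin X K"
    unfolding K_eq
    by (intro closedin_Int closedin_INT closed_eq closed_le continuous_map_add
        continuous_map_complex_mult continuous_map_canonical_const proj) simp_all
  moreover have "compactin X (PiE UNIV (\<lambda>x. cball 0 (bound x)))"
    unfolding X_def compactin_PiE by simp
  moreover have "K \<subseteq> PiE UNIV (\<lambda>x. cball 0 (bound x))"
    unfolding K_def by (auto simp: PiE_def extensional_def)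
  ultimately have "compactin X K" by (rule closed_compactin[rotated 2])
  moreover have "K \<subseteq> Mstar sm" unfolding K_def by blast
  ultimately show ?thesis
    unfolding weak_star_def compactin_subtopology by (simp add: K_def X_def)
qed

locale uT_embedding =
  fixes smA :: "complex \<Rightarrow> 'a::comm_ring_1 \<Rightarrow> 'a" and TA :: "'a topology"
    and smB :: "complex \<Rightarrow> 'b::comm_ring_1 \<Rightarrow> 'b" and TB :: "'b topology"
    and \<Phi> :: "'a \<Rightarrow> 'b"
  assumes uT: "uT_alg smA TA"
    and lc: "locally_convex_alg smB TB"
    and mult_cont: "continuous_map (prod_topology TB TB) TB (\<lambda>(x, y). x * y)"
    and hom: "alg_hom smA smB \<Phi>" and inj: "inj \<Phi>"
    and Q: "Q_sub TB (TB closure_of range \<Phi>)"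
begin

abbreviation "C \<equiv> TB closure_of range \<Phi>"
abbreviation "MC \<equiv> M_sub smB TB C"

lemma top_alg_A: "top_alg smA TA" and top_alg_B: "top_alg smB TB"
  using uT lc by (simp_all add: uT_alg_def locally_convex_alg_def)

lemma calg_A: "calg smA" and calg_B: "calg smB"
  and topspace_A: "topspace TA = UNIV" and topspace_B: "topspace TB = UNIV"
  using top_alg_A top_alg_B by (simp_all add: top_alg_def)

lemma seminorms_A: obtains PA where "\<forall>p\<in>PA. uniform_seminorm smA p" "determined_by TA PA"
  using uT by (auto simp: uT_alg_def)

lemma seminorms_B: obtains PB where "\<forall>p\<in>PB. seminorm smB p" "determined_by TB PB"
  using lc by (auto simp: locally_convex_alg_def)

lemma Phi_add: "\<Phi> (x + y) = \<Phi> x + \<Phi> y"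
  and Phi_scale: "\<Phi> (smA c x) = smB c (\<Phi> x)"
  and Phi_mult: "\<Phi> (x * y) = \<Phi> x * \<Phi> y"
  and Phi_one: "\<Phi> 1 = 1"
  using hom by (simp_all add: alg_hom_def)

lemma Phi_diff: "\<Phi> (x - y) = \<Phi> x - \<Phi> y"
  using Phi_add[of "x - y" y] by (simp add: eq_diff_eq)

lemma Phi_zero: "\<Phi> 0 = 0"
  using Phi_diff[of 0 0] by simp

lemma inv_Phi: "inv \<Phi> (\<Phi> x) = x"
  using inj by simp

lemma range_subset_C: "range \<Phi> \<subseteq> C"
  by (rule closure_of_subset) (simp add: topspace_B)

lemma Phi_in_C: "\<Phi> x \<in> C"
  using range_subset_C by blast

lemma one_range: "1 \<in> range \<Phi>"
  using Phi_one by (metis rangeI)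

lemma zero_range: "0 \<in> range \<Phi>"
  using Phi_zero by (metis rangeI)

lemma one_C: "1 \<in> C"
  using Phi_in_C[of 1] Phi_one by simp

lemma scale_C: "x \<in> C \<Longrightarrow> smB a x \<in> C"
  by (rule closure_of_closed_unop[OF top_alg_continuous_map_scale[OF top_alg_B]])
    (auto simp flip: Phi_scale)

lemma add_range: "x \<in> range \<Phi> \<Longrightarrow> y \<in> range \<Phi> \<Longrightarrow> x + y \<in> range \<Phi>"
  by (auto simp flip: Phi_add)

lemma add_C: "x \<in> C \<Longrightarrow> y \<in> C \<Longrightarrow> x + y \<in> C"
  using closure_of_closed_binop[of TB "\<lambda>(x, y). x + y" "range \<Phi>" x y] top_alg_B add_range
  by (simp add: top_alg_def)

lemma M_sub_comp_Phi:
  assumes f: "f \<in> MC"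
  shows "f \<circ> \<Phi> \<in> Mstar smA"
proof -
  have "f (\<Phi> 1) = 1" using M_sub_one[OF f one_C] Phi_one by simp
  then show ?thesis
    using f Phi_in_C unfolding M_sub_def Mstar_def
    by (auto simp: Phi_add Phi_scale Phi_mult intro!: exI[of _ 1])
qed

text \<open>Since \<open>C\<close> is a Q-algebra, some ball \<open>{y. Q (y - 1) < e}\<close> consists of invertible elements.
  A character with \<open>f y = 1\<close> would vanish at the invertible \<open>1 - y\<close>, so characters avoid the value 1
  on \<open>{y. Q y < e}\<close> and are therefore bounded by \<open>Q / e\<close>.\<close>

lemma M_sub_uniformly_bounded:
  assumes PB: "\<forall>p\<in>PB. seminorm smB p" "determined_by TB PB"
  obtains F e where "finite F" "F \<subseteq> PB" "e > 0"
    "\<And>f y. f \<in> MC \<Longrightarrow> y \<in> C \<Longrightarrow> cmod (f y) \<le> seminorm_sum F y / e"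
proof -
  define Inv where "Inv = {x\<in>C. \<exists>y\<in>C. x * y = 1}"
  have "openin (subtopology TB C) Inv" using Q by (simp add: Q_sub_def Inv_def)
  then obtain U where U: "openin TB U" "Inv = U \<inter> C" unfolding openin_subtopology by blast
  have "1 \<in> U" using one_C U(2) by (auto simp: Inv_def)
  then obtain F e where F: "finite F" "F \<subseteq> PB" "e > 0"
    and ball: "{y. seminorm_sum F (y - 1) < e} \<subseteq> U"
    using seminorm_sum_ball_subset_openin[OF PB(2,1) U(1)] by blast
  have Q: "seminorm smB (seminorm_sum F)" using PB(1) F by (intro seminorm_seminorm_sum) auto
  have "cmod (f y) \<le> seminorm_sum F y / e" if f: "f \<in> MC" and y: "y \<in> C" for f y
  proof (rule bound_if_ball_avoids_one[OF Q \<open>e > 0\<close> scale_C _ _ y])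
    show "f (smB a z) = a * f z" if "z \<in> C" for a z using f that unfolding M_sub_def by blast
    fix z assume z: "z \<in> C" and "seminorm_sum F z < e"
    then have "1 - z \<in> U"
      using ball seminorm_minus[OF Q calg_B, of z] by auto
    have one_minus: "1 - z = 1 + smB (-1) z" using calg_scale_minus_one[OF calg_B] by simp
    have "1 - z \<in> C" unfolding one_minus using add_C[OF one_C scale_C[OF z]] .
    with \<open>1 - z \<in> U\<close> obtain w where w: "w \<in> C" "(1 - z) * w = 1"
      using U(2) unfolding Inv_def by blast
    have "f (1 - z) = f 1 + (- 1) * f z"
      using f one_C scale_C[OF z] z unfolding one_minus M_sub_def by auto
    moreover have "f ((1 - z) * w) = f (1 - z) * f w"
      using f \<open>1 - z \<in> C\<close> w(1) unfolding M_sub_def by blast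
    ultimately show "f z \<noteq> 1" using w(2) M_sub_one[OF f one_C] by auto
  qed
  then show ?thesis using that F by blast
qed

lemma bounded_character_lifts:
  assumes g: "g \<in> Mstar smA"
    and PB: "\<forall>p\<in>PB. seminorm smB p" "determined_by TB PB" and F: "finite F" "F \<subseteq> PB" and K: "K > 0"
    and bound: "\<And>x. cmod (g x) \<le> K * seminorm_sum F (\<Phi> x)"
  shows "\<exists>f\<in>MC. g = f \<circ> \<Phi>"
proof -
  have g_ops: "g (x + y) = g x + g y" "g (smA a x) = a * g x" "g (x * y) = g x * g y" for x y a
    using g by (simp_all add: Mstar_def)
  define h where "h = g \<circ> inv \<Phi>"
  have h_Phi: "h (\<Phi> x) = g x" for x by (simp add: h_def inv_Phi)
  have "\<exists>f\<in>MC. \<forall>b\<in>range \<Phi>. f b = h b"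
    by (rule character_extends_to_closure[OF top_alg_B mult_cont PB(2,1) _ _ _ _ _ _ _ _ F K])
      (use one_range in \<open>auto simp: h_Phi g_ops bound Mstar_one[OF g] simp flip: Phi_add Phi_mult
        Phi_scale Phi_one\<close>)
  then obtain f where "f \<in> MC" "\<forall>b\<in>range \<Phi>. f b = h b" by blast
  moreover from this(2) have "g = f \<circ> \<Phi>" by (auto simp: fun_eq_iff h_Phi)
  ultimately show ?thesis by blast
qed

lemma M_sub_zero:
  assumes "f \<in> MC"
  shows "f 0 = 0"
proof -
  have "f (0 + 0) = f 0 + f 0" using assms zero_range range_subset_C unfolding M_sub_def by blast
  then show ?thesis by simp
qed

lemma continuous_inv_bound:
  assumes cont: "continuous_map (subtopology TB (range \<Phi>)) TA (inv \<Phi>)"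
    and PA: "\<forall>p\<in>PA. seminorm smA p" "determined_by TA PA" and p: "p \<in> PA"
    and PB: "\<forall>p\<in>PB. seminorm smB p" "determined_by TB PB"
  obtains F \<delta> where "finite F" "F \<subseteq> PB" "\<delta> > 0" "\<And>x. seminorm_sum F (\<Phi> x) < \<delta> \<Longrightarrow> p x < 1"
proof -
  have "openin TA {y. seminorm_sum {p} (y - 0) < 1}"
    using p by (intro openin_seminorm_sum_ball[OF PA(2,1) calg_A]) auto
  then have "openin TA {y. p y < 1}" by (simp add: seminorm_sum_def)
  from openin_continuous_map_preimage[OF cont this]
  have "openin (subtopology TB (range \<Phi>)) {b \<in> range \<Phi>. p (inv \<Phi> b) < 1}"
    by (simp add: topspace_B)
  then obtain U where U: "openin TB U" "{b \<in> range \<Phi>. p (inv \<Phi> b) < 1} = U \<inter> range \<Phi>"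
    unfolding openin_subtopology by blast
  have "p (inv \<Phi> 0) = 0"
    using inv_Phi[of 0] Phi_zero seminorm_zero[OF bspec[OF PA(1) p] calg_A] by simp
  then have "0 \<in> {b \<in> range \<Phi>. p (inv \<Phi> b) < 1}" using zero_range by simp
  then have "0 \<in> U" unfolding U(2) by (rule IntD1)
  then obtain F \<delta> where "finite F" "F \<subseteq> PB" "\<delta> > 0" and ball: "{y. seminorm_sum F (y - 0) < \<delta>} \<subseteq> U"
    using seminorm_sum_ball_subset_openin[OF PB(2,1) U(1)] by blast
  moreover have "p x < 1" if "seminorm_sum F (\<Phi> x) < \<delta>" for x
  proof -
    have "\<Phi> x \<in> U" using ball that by auto
    then have "\<Phi> x \<in> {b \<in> range \<Phi>. p (inv \<Phi> b) < 1}" unfolding U(2) by simp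
    then show ?thesis by (simp add: inv_Phi)
  qed
  ultimately show ?thesis using that by blast
qed

lemma character_bound_from_ball:
  assumes g: "g \<in> Mstar smA" and Q: "seminorm smB Q" and \<delta>: "\<delta> > 0"
    and small: "\<And>y. Q (\<Phi> y) < \<delta> \<Longrightarrow> cmod (g y) < 1"
  shows "cmod (g y) \<le> Q (\<Phi> y) / \<delta>"
proof -
  have "cmod ((g \<circ> inv \<Phi>) (\<Phi> y)) \<le> Q (\<Phi> y) / \<delta>"
  proof (rule bound_if_ball_avoids_one[OF Q \<delta>, where S = "range \<Phi>"])
    show "(g \<circ> inv \<Phi>) (smB a b) = a * (g \<circ> inv \<Phi>) b" if "b \<in> range \<Phi>" for a b
      using that g by (auto simp: inv_Phi Mstar_def simp flip: Phi_scale)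
    show "(g \<circ> inv \<Phi>) b \<noteq> 1" if b: "b \<in> range \<Phi>" "Q b < \<delta>" for b
    proof -
      obtain x where x: "b = \<Phi> x" using b(1) by blast
      then have "cmod (g x) < 1" using small b(2) by simp
      then show ?thesis using x by (auto simp: inv_Phi)
    qed
  qed (auto simp flip: Phi_scale)
  then show ?thesis by (simp add: inv_Phi)
qed

lemma continuous_inv_imp_radical_trivial:
  assumes cont: "continuous_map (subtopology TB (range \<Phi>)) TA (inv \<Phi>)"
  shows "range \<Phi> \<inter> strong_radical smB TB C = {0}"
proof
  show "{0} \<subseteq> range \<Phi> \<inter> strong_radical smB TB C"
    using zero_range range_subset_C M_sub_zero by (auto simp: strong_radical_def)
  obtain PA where PA: "\<forall>p\<in>PA. uniform_seminorm smA p" "determined_by TA PA" by (rule seminorms_A)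
  obtain PB where PB: "\<forall>p\<in>PB. seminorm smB p" "determined_by TB PB" by (rule seminorms_B)
  have PA_sn: "\<forall>p\<in>PA. seminorm smA p" using PA(1) uniform_seminorm_seminorm by blast
  have trivial: "x = 0" if radical: "\<forall>f\<in>MC. f (\<Phi> x) = 0" for x
  proof (rule ccontr)
    assume "x \<noteq> 0"
    have "\<exists>p\<in>PA. p x > 0"
      using top_alg_A
      by (intro determined_by_separates_points[OF PA(2) PA_sn _ topspace_A calg_A \<open>x \<noteq> 0\<close>])
        (simp add: top_alg_def)
    then obtain p where p: "p \<in> PA" "p x > 0" by blast
    obtain g where g: "g \<in> Mstar smA" "\<And>y. cmod (g y) \<le> p y" "cmod (g x) = p x"
      using uniform_seminorm_attained_by_character[OF calg_A bspec[OF PA(1) p(1)] p(2)] by blast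
    obtain F \<delta> where F: "finite F" "F \<subseteq> PB" "\<delta> > 0"
      and small: "\<And>y. seminorm_sum F (\<Phi> y) < \<delta> \<Longrightarrow> p y < 1"
      using continuous_inv_bound[OF cont PA_sn PA(2) p(1) PB] by blast
    have Q: "seminorm smB (seminorm_sum F)" using PB(1) F by (intro seminorm_seminorm_sum) auto
    have "cmod (g y) < 1" if "seminorm_sum F (\<Phi> y) < \<delta>" for y
      using small[OF that] g(2)[of y] by linarith
    then have "cmod (g y) \<le> 1 / \<delta> * seminorm_sum F (\<Phi> y)" for y
      using character_bound_from_ball[OF g(1) Q \<open>\<delta> > 0\<close>, of y] by simp
    then have "\<exists>f\<in>MC. g = f \<circ> \<Phi>"
      using \<open>\<delta> > 0\<close> by (intro bounded_character_lifts[OF g(1) PB F(1,2), of "1 / \<delta>"]) simp_all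
    then obtain f where "f \<in> MC" "g = f \<circ> \<Phi>" by blast
    then show False using radical g(3) p(2) by auto
  qed
  show "range \<Phi> \<inter> strong_radical smB TB C \<subseteq> {0}"
  proof
    fix b assume "b \<in> range \<Phi> \<inter> strong_radical smB TB C"
    then obtain x where b: "b = \<Phi> x" and radical: "\<forall>f\<in>MC. f (\<Phi> x) = 0"
      by (auto simp: strong_radical_def)
    from trivial[OF radical] have "x = 0" .
    then show "b \<in> {0}" using b Phi_zero by simp
  qed
qed

lemma image_M_sub_eq_bounded_Mstar:
  assumes PB: "\<forall>p\<in>PB. seminorm smB p" "determined_by TB PB" and F: "finite F" "F \<subseteq> PB" and e: "e > 0"
    and bound: "\<And>f y. f \<in> MC \<Longrightarrow> y \<in> C \<Longrightarrow> cmod (f y) \<le> seminorm_sum F y / e"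
  shows "(\<lambda>f. f \<circ> \<Phi>) ` MC = {g \<in> Mstar smA. \<forall>x. cmod (g x) \<le> seminorm_sum F (\<Phi> x) / e}"
proof (intro equalityI subsetI)
  fix g assume "g \<in> (\<lambda>f. f \<circ> \<Phi>) ` MC"
  then obtain f where "f \<in> MC" "g = f \<circ> \<Phi>" by blast
  then show "g \<in> {g \<in> Mstar smA. \<forall>x. cmod (g x) \<le> seminorm_sum F (\<Phi> x) / e}"
    using M_sub_comp_Phi bound Phi_in_C by auto
next
  fix g assume "g \<in> {g \<in> Mstar smA. \<forall>x. cmod (g x) \<le> seminorm_sum F (\<Phi> x) / e}"
  then have "\<exists>f\<in>MC. g = f \<circ> \<Phi>"
    using e by (intro bounded_character_lifts[OF _ PB F, of g "1 / e"]) simp_all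
  then show "g \<in> (\<lambda>f. f \<circ> \<Phi>) ` MC" by blast
qed

text \<open>The image of \<open>M(C)\<close> is weak* compact, so if it were proper, weak \<open>\<sigma>\<^sup>*\<close>-compact-regularity
  would produce some \<open>x \<noteq> 0\<close> with \<open>\<Phi> x\<close> in the strong radical.\<close>

lemma radical_trivial_imp_surjective:
  assumes regular: "weakly_sigma_star_compact_regular smA"
    and trivial: "range \<Phi> \<inter> strong_radical smB TB C = {0}"
  shows "(\<lambda>f. f \<circ> \<Phi>) ` MC = Mstar smA"
proof (rule ccontr)
  assume proper: "(\<lambda>f. f \<circ> \<Phi>) ` MC \<noteq> Mstar smA"
  obtain PB where PB: "\<forall>p\<in>PB. seminorm smB p" "determined_by TB PB" by (rule seminorms_B)
  obtain F e where F: "finite F" "F \<subseteq> PB" "e > 0"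
    and bound: "\<And>f y. f \<in> MC \<Longrightarrow> y \<in> C \<Longrightarrow> cmod (f y) \<le> seminorm_sum F y / e"
    using M_sub_uniformly_bounded[OF PB] by blast
  have image: "(\<lambda>f. f \<circ> \<Phi>) ` MC = {g \<in> Mstar smA. \<forall>x. cmod (g x) \<le> seminorm_sum F (\<Phi> x) / e}"
    by (rule image_M_sub_eq_bounded_Mstar[OF PB F]) (rule bound)
  have "compactin (weak_star smA) ((\<lambda>f. f \<circ> \<Phi>) ` MC)"
    unfolding image by (rule compactin_weak_star_bounded)
  moreover have "(\<lambda>f. f \<circ> \<Phi>) ` MC \<subset> Mstar smA"
    using proper unfolding image by blast
  ultimately obtain x where "x \<noteq> 0" and zero: "\<forall>g\<in>(\<lambda>f. f \<circ> \<Phi>) ` MC. g x = 0"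
    using regular unfolding weakly_sigma_star_compact_regular_def by meson
  then have "\<Phi> x \<in> range \<Phi> \<inter> strong_radical smB TB C"
    using Phi_in_C by (simp add: strong_radical_def)
  then have "\<Phi> x = \<Phi> 0" unfolding trivial Phi_zero by simp
  then show False using \<open>x \<noteq> 0\<close> inj by (simp add: inj_eq)
qed

lemma surjective_imp_seminorm_bound:
  assumes surj: "(\<lambda>f. f \<circ> \<Phi>) ` MC = Mstar smA" and p: "uniform_seminorm smA p"
    and e: "e > 0" and bound: "\<And>f y. f \<in> MC \<Longrightarrow> y \<in> C \<Longrightarrow> cmod (f y) \<le> seminorm_sum F y / e"
    and Q: "seminorm smB (seminorm_sum F)"
  shows "p x \<le> seminorm_sum F (\<Phi> x) / e"
proof (cases "p x > 0")
  case True
  obtain g where "g \<in> Mstar smA" and gx: "cmod (g x) = p x"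
    using uniform_seminorm_attained_by_character[OF calg_A p True] by blast
  then obtain f where "f \<in> MC" "g = f \<circ> \<Phi>" using surj by blast
  then have "cmod (g x) \<le> seminorm_sum F (\<Phi> x) / e" using bound Phi_in_C by simp
  then show ?thesis using gx by simp
next
  case False
  moreover have "0 \<le> seminorm_sum F (\<Phi> x) / e" using seminorm_nonneg[OF Q] e by simp
  ultimately show ?thesis by linarith
qed

lemma continuous_inv_if_seminorm_bound:
  assumes PA: "\<forall>p\<in>PA. seminorm smA p" "determined_by TA PA"
    and PB: "\<forall>p\<in>PB. seminorm smB p" "determined_by TB PB" and F: "finite F" "F \<subseteq> PB" and e: "e > 0"
    and bound: "\<And>p x. p \<in> PA \<Longrightarrow> p x \<le> seminorm_sum F (\<Phi> x) / e"
  shows "continuous_map (subtopology TB (range \<Phi>)) TA (inv \<Phi>)"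
  unfolding continuous_map_def
proof (intro conjI allI impI)
  show "inv \<Phi> \<in> topspace (subtopology TB (range \<Phi>)) \<rightarrow> topspace TA" by (simp add: topspace_A)
  fix U assume U: "openin TA U"
  show "openin (subtopology TB (range \<Phi>)) {b \<in> topspace (subtopology TB (range \<Phi>)). inv \<Phi> b \<in> U}"
  proof (subst openin_subopen, intro ballI)
    fix b0 assume "b0 \<in> {b \<in> topspace (subtopology TB (range \<Phi>)). inv \<Phi> b \<in> U}"
    then obtain x0 where x0: "b0 = \<Phi> x0" "x0 \<in> U" by (auto simp: inv_Phi)
    obtain G \<epsilon> where G: "finite G" "G \<subseteq> PA" "\<epsilon> > 0" and ball: "{y. seminorm_sum G (y - x0) < \<epsilon>} \<subseteq> U"
      using seminorm_sum_ball_subset_openin[OF PA(2,1) U x0(2)] by blast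
    define r where "r = e * \<epsilon> / (real (card G) + 1)"
    define V where "V = range \<Phi> \<inter> {y. seminorm_sum F (y - b0) < r}"
    have "openin (subtopology TB (range \<Phi>)) V"
      unfolding V_def
      by (rule openin_subtopology_Int2[OF openin_seminorm_sum_ball[OF PB(2,1) calg_B F]])
    moreover have "b0 \<in> V"
    proof -
      have "seminorm smB (seminorm_sum F)" using PB(1) F by (intro seminorm_seminorm_sum) auto
      then have "seminorm_sum F (b0 - b0) = 0" using seminorm_zero calg_B by simp
      moreover have "r > 0" using e G(3) by (simp add: r_def)
      ultimately show ?thesis using x0(1) by (simp add: V_def)
    qed
    moreover have "V \<subseteq> {b \<in> topspace (subtopology TB (range \<Phi>)). inv \<Phi> b \<in> U}"
    proof
      fix b assume "b \<in> V"
      then obtain x where b: "b = \<Phi> x" and small: "seminorm_sum F (\<Phi> (x - x0)) < r"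
        by (auto simp: V_def x0(1) Phi_diff)
      have "seminorm_sum F (\<Phi> (x - x0)) / e * (real (card G) + 1) < \<epsilon>"
        using small e by (simp add: r_def field_simps)
      then have "seminorm_sum G (x - x0) < \<epsilon>"
        using bound G(2) \<open>\<epsilon> > 0\<close> by (intro seminorm_sum_less[OF G(1)]) auto
      then have "x \<in> U" using ball by auto
      then show "b \<in> {b \<in> topspace (subtopology TB (range \<Phi>)). inv \<Phi> b \<in> U}"
        using b by (simp add: topspace_B inv_Phi)
    qed
    ultimately show "\<exists>V. openin (subtopology TB (range \<Phi>)) V \<and> b0 \<in> V \<and>
        V \<subseteq> {b \<in> topspace (subtopology TB (range \<Phi>)). inv \<Phi> b \<in> U}"
      by blast
  qed
qed

lemma surjective_imp_continuous_inv:
  assumes surj: "(\<lambda>f. f \<circ> \<Phi>) ` MC = Mstar smA"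
  shows "continuous_map (subtopology TB (range \<Phi>)) TA (inv \<Phi>)"
proof -
  obtain PA where PA: "\<forall>p\<in>PA. uniform_seminorm smA p" "determined_by TA PA" by (rule seminorms_A)
  obtain PB where PB: "\<forall>p\<in>PB. seminorm smB p" "determined_by TB PB" by (rule seminorms_B)
  obtain F e where F: "finite F" "F \<subseteq> PB" "e > 0"
    and bound: "\<And>f y. f \<in> MC \<Longrightarrow> y \<in> C \<Longrightarrow> cmod (f y) \<le> seminorm_sum F y / e"
    using M_sub_uniformly_bounded[OF PB] by blast
  have Q: "seminorm smB (seminorm_sum F)" using PB(1) F by (intro seminorm_seminorm_sum) auto
  have "p x \<le> seminorm_sum F (\<Phi> x) / e" if "p \<in> PA" for p x
    by (rule surjective_imp_seminorm_bound[OF surj _ F(3) _ Q]) (use PA(1) that bound in auto)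
  moreover have "\<forall>p\<in>PA. seminorm smA p" using PA(1) uniform_seminorm_seminorm by blast
  ultimately show ?thesis by (intro continuous_inv_if_seminorm_bound[OF _ PA(2) PB F])
qed

end

theorem theorem3p2:
  fixes smA :: "complex \<Rightarrow> 'a::comm_ring_1 \<Rightarrow> 'a" and TA :: "'a topology"
    and smB :: "complex \<Rightarrow> 'b::comm_ring_1 \<Rightarrow> 'b" and TB :: "'b topology"
    and \<Phi> :: "'a \<Rightarrow> 'b"
  assumes A: "uT_alg smA TA" "weakly_sigma_star_compact_regular smA"
    and B: "locally_convex_alg smB TB"
           "continuous_map (prod_topology TB TB) TB (\<lambda>(x, y). x * y)"
    and hom: "alg_hom smA smB \<Phi>" "inj \<Phi>"
    and Q: "Q_sub TB (TB closure_of range \<Phi>)"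
  shows "(continuous_map (subtopology TB (range \<Phi>)) TA (inv \<Phi>)
            \<longleftrightarrow> range \<Phi> \<inter> strong_radical smB TB (TB closure_of range \<Phi>) = {0})
       \<and> (range \<Phi> \<inter> strong_radical smB TB (TB closure_of range \<Phi>) = {0}
            \<longleftrightarrow> (\<lambda>f. f \<circ> \<Phi>) ` M_sub smB TB (TB closure_of range \<Phi>) = Mstar smA)"
proof -
  interpret uT_embedding smA TA smB TB \<Phi>
    using A(1) B hom Q by unfold_locales
  show ?thesis
    using continuous_inv_imp_radical_trivial radical_trivial_imp_surjective[OF A(2)]
      surjective_imp_continuous_inv
    by blast
qed

end
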